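(* Let $\mathbf t=(t_1,t_2,t_3)\in\mathbb N^3$, $k=t_1+t_2+t_3+2$, $w\ge k-1$, and let $n>w$. Consider the first (top-level) call to Partition performed by Generalized Yaroslavskiy Quicksort with parameters $\mathbf t,w$ on the input $A[i]=U_i$, $1\le i\le n$, with $U_1,\dots,U_n$ i.i.d. uniform on $(0,1)$. Then the number $T_S$ of swaps performed in this call satisfies $T_S=I_1+l@\mathcal K$, and conditional on $\mathbf I=(I_1,I_2,I_3)$, \[ T_S\overset{d}{=}I_1+X+B, \] where, conditional on $\mathbf I$, $X\sim\mathrm{HypG}(I_1+I_2,I_3,n-k)$ and $B\sim\mathrm{Bernoulli}\bigl(\tfrac{I_3}{n-k}\bigr)$.
   Context: Procedure Partition$(A,\mathit{left},\mathit{right},P,Q)$: set $\ell\gets\mathit{left}$, $g\gets\mathit{right}$, $k\gets\ell$. While $k\le g$: if $A[k]<P$, swap $A[k]$, $A[\ell]$ and $\ell\gets\ell+1$; else, if $A[k]\ge Q$, then (i) while ($A[g]>Q$ and $k<g$) set $g\gets g-1$; (ii) if $A[g]\ge P$, swap $A[k]$, $A[g]$; otherwise swap $A[k]$, $A[g]$, then swap $A[k]$, $A[\ell]$ and $\ell\gets\ell+1$; (iii) $g\gets g-1$. Then $k\gets k+1$. Return $(\ell-1,g+1)$. Swaps are the swap operations. Generalized Yaroslavskiy Quicksort (top-level step on $A[1..n]$, $n>w$): the sample consists of the $t_1+t_2+1$ leftmost and the $t_3+1$ rightmost entries; it is sorted, $P$ is its $(t_1+1)$-st smallest and $Q$ its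 $(t_1+t_2+2)$-nd smallest element; then Partition is called with pivots $P,Q$ on the $n-k$ ordinary (non-sample) elements at positions $t_1+t_2+2,\dots,n-t_3-1$. Notation for this first Partition call: an element $U$ is small if $U<P$, medium if $P<U<Q$, large if $U>Q$. $I_1,I_2,I_3$ are the numbers of small, medium, large ordinary elements. $\mathcal K$ is the set of values of the index $k$ at which the array is accessed as $A[k]$, and $l@\mathcal K$ is the number of positions $i\in\mathcal K$ whose element before partitioning is large. $\mathrm{HypG}(a,r,N)$ denotes the number of red balls obtained when drawing $a$ times without replacement from an urn with $N$ balls of which $r$ are red. *)

theory Defs
  imports "HOL-Probability.Probability"
begin

definition swapA :: "(nat \<Rightarrow> real) \<Rightarrow> nat \<Rightarrow> nat \<Rightarrow> (nat \<Rightarrow> real)" where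
  "swapA A i j = A(i := A j, j := A i)"

fun inner_g :: "(nat \<Rightarrow> real) \<Rightarrow> real \<Rightarrow> nat \<Rightarrow> nat \<Rightarrow> nat" where
  "inner_g A Q k g = (if A g > Q \<and> k < g then inner_g A Q k (g - 1) else g)"
declare inner_g.simps[simp del]

lemma inner_g_le: "inner_g A Q k g \<le> g"
proof (induction A Q k g rule: inner_g.induct)
  case (1 A Q k g)
  show ?case
  proof (cases "A g > Q \<and> k < g")
    case True
    then have "inner_g A Q k g = inner_g A Q k (g - 1)" by (rule trans[OF inner_g.simps if_P])
    then show ?thesis using 1 True by linarith
  next
    case False
    then have "inner_g A Q k g = g" by (rule trans[OF inner_g.simps if_not_P])
    then show ?thesis by simp
  qed
qed

lemma inner_g_ge: "k \<le> g \<Longrightarrow> k \<le> inner_g A Q k g"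
proof (induction A Q k g rule: inner_g.induct)
  case (1 A Q k g)
  show ?case
  proof (cases "A g > Q \<and> k < g")
    case True
    then have "inner_g A Q k g = inner_g A Q k (g - 1)" by (rule trans[OF inner_g.simps if_P])
    then show ?thesis using 1 True by auto
  next
    case False
    then have "inner_g A Q k g = g" by (rule trans[OF inner_g.simps if_not_P])
    then show ?thesis using 1 by simp
  qed
qed

text \<open>State: array A, indices l, g, k, the number of swaps
  performed so far, and the set of values of k at which A[k] was accessed.  The procedure's return
  value (l-1, g+1) can be read off from the second and third components.\<close>
function part_loop :: "real \<Rightarrow> real \<Rightarrow> (nat \<Rightarrow> real) \<Rightarrow> nat \<Rightarrow> nat \<Rightarrow> nat \<Rightarrow> nat \<Rightarrow> nat set
    \<Rightarrow> (nat \<Rightarrow> real) \<times> nat \<times> nat \<times> nat \<times> nat set" where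
  "part_loop P Q A l g k s K =
    (if k \<le> g then
       (if A k < P then part_loop P Q (swapA A k l) (l + 1) g (k + 1) (s + 1) (insert k K)
        else if A k \<ge> Q then
          (let g1 = inner_g A Q k g in
           if A g1 \<ge> P then part_loop P Q (swapA A k g1) l (g1 - 1) (k + 1) (s + 1) (insert k K)
           else part_loop P Q (swapA (swapA A k g1) k l) (l + 1) (g1 - 1) (k + 1) (s + 2) (insert k K))
        else part_loop P Q A l g (k + 1) s (insert k K))
     else (A, l, g, s, K))"
  by pat_completeness auto
termination
proof (relation "Wellfounded.measure (\<lambda>(P, Q, A, l, g, k, s, K). g + 1 - k)", goal_cases)
  case 1 then show ?case by simp
next
  case 2 then show ?case by auto
next
  case (3 P Q A l g k s K x)
  then have "x \<le> g" "k \<le> x" using inner_g_le inner_g_ge by auto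
  then show ?case by auto
next
  case (4 P Q A l g k s K x)
  then have "x \<le> g" "k \<le> x" using inner_g_le inner_g_ge by auto
  then show ?case by auto
next
  case 5 then show ?case by auto
qed

definition yq_sample :: "nat \<Rightarrow> nat \<Rightarrow> nat \<Rightarrow> nat \<Rightarrow> (nat \<Rightarrow> real) \<Rightarrow> real list" where
  "yq_sample t1 t2 t3 n U = map U ([1..<t1 + t2 + 2] @ [n - t3..<n + 1])"

text \<open>P is the (t1+1)-st smallest, Q the (t1+t2+2)-nd smallest sample element.\<close>
definition yq_P :: "nat \<Rightarrow> nat \<Rightarrow> nat \<Rightarrow> nat \<Rightarrow> (nat \<Rightarrow> real) \<Rightarrow> real" where
  "yq_P t1 t2 t3 n U = sort (yq_sample t1 t2 t3 n U) ! t1"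

definition yq_Q :: "nat \<Rightarrow> nat \<Rightarrow> nat \<Rightarrow> nat \<Rightarrow> (nat \<Rightarrow> real) \<Rightarrow> real" where
  "yq_Q t1 t2 t3 n U = sort (yq_sample t1 t2 t3 n U) ! (t1 + t2 + 1)"

text \<open>Positions of the ordinary (non-sample) elements.\<close>
definition yq_ord :: "nat \<Rightarrow> nat \<Rightarrow> nat \<Rightarrow> nat \<Rightarrow> nat set" where
  "yq_ord t1 t2 t3 n = {t1 + t2 + 2 .. n - t3 - 1}"

text \<open>The first call Partition(A, t1+t2+2, n-t3-1, P, Q) on the input array U
  (sorting the sample does not touch the ordinary positions).\<close>
definition yq_first_partition ::
  "nat \<Rightarrow> nat \<Rightarrow> nat \<Rightarrow> nat \<Rightarrow> (nat \<Rightarrow> real) \<Rightarrow> (nat \<Rightarrow> real) \<times> nat \<times> nat \<times> nat \<times> nat set" where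
  "yq_first_partition t1 t2 t3 n U =
     part_loop (yq_P t1 t2 t3 n U) (yq_Q t1 t2 t3 n U) U
       (t1 + t2 + 2) (n - t3 - 1) (t1 + t2 + 2) 0 {}"

definition yq_TS :: "nat \<Rightarrow> nat \<Rightarrow> nat \<Rightarrow> nat \<Rightarrow> (nat \<Rightarrow> real) \<Rightarrow> nat" where
  "yq_TS t1 t2 t3 n U = fst (snd (snd (snd (yq_first_partition t1 t2 t3 n U))))"

definition yq_K :: "nat \<Rightarrow> nat \<Rightarrow> nat \<Rightarrow> nat \<Rightarrow> (nat \<Rightarrow> real) \<Rightarrow> nat set" where
  "yq_K t1 t2 t3 n U = snd (snd (snd (snd (yq_first_partition t1 t2 t3 n U))))"

definition yq_lK :: "nat \<Rightarrow> nat \<Rightarrow> nat \<Rightarrow> nat \<Rightarrow> (nat \<Rightarrow> real) \<Rightarrow> nat" where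
  "yq_lK t1 t2 t3 n U = card {i \<in> yq_K t1 t2 t3 n U. U i > yq_Q t1 t2 t3 n U}"

definition yq_I :: "nat \<Rightarrow> nat \<Rightarrow> nat \<Rightarrow> nat \<Rightarrow> (nat \<Rightarrow> real) \<Rightarrow> nat \<times> nat \<times> nat" where
  "yq_I t1 t2 t3 n U =
    (let P = yq_P t1 t2 t3 n U; Q = yq_Q t1 t2 t3 n U; Ord = yq_ord t1 t2 t3 n in
     (card {i \<in> Ord. U i < P}, card {i \<in> Ord. P < U i \<and> U i < Q}, card {i \<in> Ord. U i > Q}))"

definition unif_input :: "nat \<Rightarrow> (nat \<Rightarrow> real) measure" where
  "unif_input n = PiM {1..n} (\<lambda>_. uniform_measure lborel {0<..<1::real})"

text \<open>HypG(a, r, N): number of red balls when drawing a times without replacement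
  from an urn of N balls (numbered 0..N-1) of which r (those numbered < r) are red.\<close>
definition hypg_pmf :: "nat \<Rightarrow> nat \<Rightarrow> nat \<Rightarrow> nat pmf" where
  "hypg_pmf a r N = map_pmf (\<lambda>S. card (S \<inter> {..<r})) (pmf_of_set {S. S \<subseteq> {..<N} \<and> card S = a})"

end

theory Submission
  imports Defs "HOL-Combinatorics.Permutations"
begin

text \<open>Loop invariant analysis of Partition shows that each small element costs one swap, each
  large element met by the left pointer costs one swap, and nothing else is swapped.  When no
  two input values coincide (which holds almost surely), the left pointer stops exactly at the
  position c after the first I1 + I2 ordinary positions, or one later if the element at c is
  large.  Hence T_S = I1 + l@K = I1 + X + B, where X counts large elements among the first
  I1 + I2 ordinary positions and B says whether the element at c is large.  Permuting the
  ordinary positions preserves the input distribution and fixes the pivots, so conditional on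
  I the set of large positions is a uniformly random I3-subset of the n - k ordinary positions;
  this makes X hypergeometric and B Bernoulli(I3/(n - k)).\<close>

section \<open>The partitioning loop\<close>

declare part_loop.simps[simp del]

lemma swapA_apply: "swapA A a b j = (if j = b then A a else if j = a then A b else A j)"
  by (simp add: swapA_def)

lemma card_filter_swapA:
  assumes "a \<in> R" "b \<in> R"
  shows "card {j\<in>R. \<Phi> (swapA A a b j)} = card {j\<in>R. \<Phi> (A j)}"
proof -
  have "swapA A a b = A \<circ> Transposition.transpose a b"
    by (auto simp: swapA_def Transposition.transpose_def fun_eq_iff)
  then have "{j\<in>R. \<Phi> (swapA A a b j)} = Transposition.transpose a b ` {j\<in>R. \<Phi> (A j)}"
    using assms by (auto simp: image_iff Transposition.transpose_def split: if_splits)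
  then show ?thesis by (simp add: card_image)
qed

lemma card_filter_atLeastLessThan_Suc:
  assumes "lo \<le> k"
  shows "card {j\<in>{lo..<Suc k}. p j} = card {j\<in>{lo..<k}. p j} + of_bool (p k)"
proof -
  have "{j\<in>{lo..<Suc k}. p j} = (if p k then insert k {j\<in>{lo..<k}. p j} else {j\<in>{lo..<k}. p j})"
    using assms by (auto simp: less_Suc_eq)
  then show ?thesis by auto
qed

lemma card_filter_greaterThan_shift:
  fixes x g hi :: nat
  assumes "0 < x" "x \<le> g" "g \<le> hi" "\<And>j. x < j \<Longrightarrow> j \<le> g \<Longrightarrow> \<not> p j"
  shows "card {j\<in>{x - 1<..hi}. p j} = card {j\<in>{g<..hi}. p j} + of_bool (p x)"
proof -
  have "j \<in> {x - 1<..hi} \<longleftrightarrow> j = x \<or> (x < j \<and> j \<le> g) \<or> j \<in> {g<..hi}" for j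
    using assms by auto
  then have "{j\<in>{x - 1<..hi}. p j} = (if p x then insert x {j\<in>{g<..hi}. p j} else {j\<in>{g<..hi}. p j})"
    using assms by auto
  then show ?thesis using assms by auto
qed

lemma inner_g_spec:
  assumes "k \<le> g"
  shows "k \<le> inner_g A Q k g \<and> inner_g A Q k g \<le> g \<and>
         (\<forall>j. inner_g A Q k g < j \<and> j \<le> g \<longrightarrow> Q < A j) \<and>
         (A (inner_g A Q k g) \<le> Q \<or> inner_g A Q k g = k)"
  using assms
proof (induction A Q k g rule: inner_g.induct)
  case (1 A Q k g)
  show ?case
  proof (cases "Q < A g \<and> k < g")
    case True
    then have "inner_g A Q k g = inner_g A Q k (g - 1)" by (subst inner_g.simps) simp
    moreover have IH: "k \<le> inner_g A Q k (g - 1) \<and> inner_g A Q k (g - 1) \<le> g - 1 \<and>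
        (\<forall>j. inner_g A Q k (g - 1) < j \<and> j \<le> g - 1 \<longrightarrow> Q < A j) \<and>
        (A (inner_g A Q k (g - 1)) \<le> Q \<or> inner_g A Q k (g - 1) = k)"
      using 1(1)[OF True] True by fastforce
    moreover have "Q < A j" if "inner_g A Q k (g - 1) < j" "j \<le> g" for j
      using IH True that by (cases "j = g") auto
    ultimately show ?thesis by auto
  next
    case False
    then have "inner_g A Q k g = g" by (rule trans[OF inner_g.simps if_not_P])
    then show ?thesis using False 1(2) by auto
  qed
qed

lemma inner_g_cong:
  assumes "\<And>j. k \<le> j \<Longrightarrow> j \<le> g \<Longrightarrow> Q < A j \<longleftrightarrow> Q' < B j"
  shows "inner_g A Q k g = inner_g B Q' k g"
  using assms
proof (induction A Q k g rule: inner_g.induct)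
  case (1 A Q k g)
  have same_test: "(Q < A g \<and> k < g) = (Q' < B g \<and> k < g)"
    using 1(2)[of g] by auto
  show ?case
  proof (cases "Q < A g \<and> k < g")
    case True
    have "inner_g A Q k g = inner_g A Q k (g - 1)"
      using True by (rule trans[OF inner_g.simps if_P])
    also have "\<dots> = inner_g B Q' k (g - 1)"
      using 1 True by simp
    also have "\<dots> = inner_g B Q' k g"
      using True same_test by (intro sym[OF trans[OF inner_g.simps if_P]]) simp
    finally show ?thesis .
  next
    case False
    have "inner_g A Q k g = g"
      using False by (rule trans[OF inner_g.simps if_not_P])
    moreover have "inner_g B Q' k g = g"
      using False same_test by (intro trans[OF inner_g.simps if_not_P]) simp
    ultimately show ?thesis by simp
  qed
qed

locale dual_pivot_partition =
  fixes P Q :: real and A0 :: "nat \<Rightarrow> real" and lo hi :: nat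
  assumes P_le_Q: "P \<le> Q" and lo_pos: "0 < lo"
begin

text \<open>Each small or large
  element met at k costs one swap, and each small element fetched from the right end
  costs a second one; the conditions on position g+1 record whether the last element
  fetched from the right was non-large, or whether the loop ended with a large element
  swapped onto itself.\<close>
definition part_inv :: "(nat \<Rightarrow> real) \<Rightarrow> nat \<Rightarrow> nat \<Rightarrow> nat \<Rightarrow> nat \<Rightarrow> nat set \<Rightarrow> bool" where
  "part_inv A l g k s K \<longleftrightarrow>
    lo \<le> l \<and> l \<le> k \<and> k \<le> g + 2 \<and> g \<le> hi \<and> lo \<le> g + 1 \<and> K = {lo..<k} \<and>
    (\<forall>j. k \<le> j \<and> j \<le> g \<longrightarrow> A j = A0 j) \<and>
    (\<forall>j. lo \<le> j \<and> j < l \<longrightarrow> A j < P) \<and>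
    (\<forall>j. l \<le> j \<and> j < k \<and> j \<le> g \<longrightarrow> A j \<le> Q) \<and>
    (\<forall>j. g < j \<and> j \<le> hi \<longrightarrow> Q \<le> A j) \<and>
    (\<forall>\<Phi>. card {j\<in>{lo..hi}. \<Phi> (A j)} = card {j\<in>{lo..hi}. \<Phi> (A0 j)}) \<and>
    (g < hi \<and> k \<le> g + 1 \<longrightarrow> A0 (Suc g) \<le> Q) \<and>
    (k = g + 2 \<longrightarrow> Q \<le> A0 (Suc g) \<and> Suc g \<le> hi) \<and>
    s = card {j\<in>{lo..<k}. A0 j < P} + card {j\<in>{lo..<k}. Q \<le> A0 j}
        + card {j\<in>{g<..hi}. A0 j < P}"

context
  fixes A l g k s K
  assumes inv: "part_inv A l g k s K" and k_le_g: "k \<le> g"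
begin

private lemma
  shows inv_bounds: "lo \<le> l" "l \<le> k" "g \<le> hi" "K = {lo..<k}"
    and inv_untouched: "\<And>j. k \<le> j \<Longrightarrow> j \<le> g \<Longrightarrow> A j = A0 j"
    and inv_small: "\<And>j. lo \<le> j \<Longrightarrow> j < l \<Longrightarrow> A j < P"
    and inv_medium: "\<And>j. l \<le> j \<Longrightarrow> j < k \<Longrightarrow> A j \<le> Q"
    and inv_large: "\<And>j. g < j \<Longrightarrow> j \<le> hi \<Longrightarrow> Q \<le> A j"
    and inv_counts: "\<And>\<Phi>. card {j\<in>{lo..hi}. \<Phi> (A j)} = card {j\<in>{lo..hi}. \<Phi> (A0 j)}"
    and inv_fetched: "g < hi \<Longrightarrow> A0 (Suc g) \<le> Q"
    and inv_swaps: "s = card {j\<in>{lo..<k}. A0 j < P} + card {j\<in>{lo..<k}. Q \<le> A0 j}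
        + card {j\<in>{g<..hi}. A0 j < P}"
  using inv k_le_g unfolding part_inv_def by auto

private lemma A_k: "A k = A0 k"
  using inv_untouched k_le_g by simp

lemma part_inv_small_step:
  assumes small: "A k < P"
  shows "part_inv (swapA A k l) (l + 1) g (k + 1) (s + 1) (insert k K)"
proof -
  have "card {j\<in>{lo..<Suc k}. A0 j < P} = card {j\<in>{lo..<k}. A0 j < P} + 1"
    "card {j\<in>{lo..<Suc k}. Q \<le> A0 j} = card {j\<in>{lo..<k}. Q \<le> A0 j}"
    using card_filter_atLeastLessThan_Suc[of lo k] inv_bounds A_k small P_le_Q by auto
  moreover have "card {j\<in>{lo..hi}. \<Phi> (swapA A k l j)} = card {j\<in>{lo..hi}. \<Phi> (A0 j)}" for \<Phi>
    using card_filter_swapA[of k "{lo..hi}" l \<Phi> A] inv_counts inv_bounds k_le_g by auto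
  ultimately show ?thesis
    unfolding part_inv_def
    using inv_bounds k_le_g inv_untouched inv_small inv_medium inv_large inv_fetched inv_swaps small
    by (auto simp: swapA_apply)
qed

lemma part_inv_medium_step:
  assumes not_small: "\<not> A k < P" and not_large: "\<not> Q \<le> A k"
  shows "part_inv A l g (k + 1) s (insert k K)"
proof -
  have "card {j\<in>{lo..<Suc k}. A0 j < P} = card {j\<in>{lo..<k}. A0 j < P}"
    "card {j\<in>{lo..<Suc k}. Q \<le> A0 j} = card {j\<in>{lo..<k}. Q \<le> A0 j}"
    using card_filter_atLeastLessThan_Suc[of lo k] inv_bounds A_k not_small not_large by auto
  moreover have "A j \<le> Q" if "l \<le> j" "j < Suc k" for j
    using inv_medium[of j] not_large that by (cases "j = k") auto
  ultimately show ?thesis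
    unfolding part_inv_def
    using inv_bounds k_le_g inv_untouched inv_small inv_large inv_fetched inv_counts inv_swaps
    by auto
qed

lemma part_inv_large_step:
  assumes large: "Q \<le> A k" and x_def: "x = inner_g A Q k g" and fetched: "P \<le> A x"
  shows "part_inv (swapA A k x) l (x - 1) (k + 1) (s + 1) (insert k K)"
proof -
  from inner_g_spec[OF k_le_g, of A Q] x_def have x_bounds: "k \<le> x" "x \<le> g"
    and skipped: "\<And>j. x < j \<Longrightarrow> j \<le> g \<Longrightarrow> Q < A j" and x_stop: "A x \<le> Q \<or> x = k"
    by auto
  have x_pos: "0 < x" using x_bounds inv_bounds lo_pos by linarith
  have A_x: "A x = A0 x" using inv_untouched x_bounds by simp
  have "card {j\<in>{lo..<Suc k}. A0 j < P} = card {j\<in>{lo..<k}. A0 j < P}"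
    "card {j\<in>{lo..<Suc k}. Q \<le> A0 j} = card {j\<in>{lo..<k}. Q \<le> A0 j} + 1"
    using card_filter_atLeastLessThan_Suc[of lo k] inv_bounds A_k large P_le_Q by auto
  moreover have "card {j\<in>{x - 1<..hi}. A0 j < P} = card {j\<in>{g<..hi}. A0 j < P}"
    using card_filter_greaterThan_shift[OF x_pos x_bounds(2) inv_bounds(3), of "\<lambda>j. A0 j < P"]
      skipped inv_untouched x_bounds P_le_Q A_x fetched by force
  moreover have "card {j\<in>{lo..hi}. \<Phi> (swapA A k x j)} = card {j\<in>{lo..hi}. \<Phi> (A0 j)}" for \<Phi>
    using card_filter_swapA[of k "{lo..hi}" x \<Phi> A] inv_counts inv_bounds k_le_g x_bounds by auto
  moreover have "Q \<le> swapA A k x j" if j: "x - 1 < j" "j \<le> hi" for j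
  proof -
    consider "j = x" | "x < j" "j \<le> g" | "g < j" using j x_pos by linarith
    then show ?thesis
      using j large skipped[of j] inv_large[of j] x_bounds by cases (auto simp: swapA_apply)
  qed
  moreover have "swapA A k x j \<le> Q" if "l \<le> j" "j < Suc k" "j \<le> x - 1" for j
    using that inv_medium[of j] x_stop x_pos x_bounds by (cases "j = k") (auto simp: swapA_apply)
  ultimately show ?thesis
    unfolding part_inv_def
    using inv_bounds k_le_g x_bounds x_pos inv_untouched inv_small inv_swaps A_k A_x large x_stop
    by (auto simp: swapA_apply)
qed

lemma part_inv_large_small_step:
  assumes large: "Q \<le> A k" and x_def: "x = inner_g A Q k g" and fetched: "\<not> P \<le> A x"
  shows "part_inv (swapA (swapA A k x) k l) (l + 1) (x - 1) (k + 1) (s + 2) (insert k K)"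
proof -
  from inner_g_spec[OF k_le_g, of A Q] x_def have x_bounds: "k \<le> x" "x \<le> g"
    and skipped: "\<And>j. x < j \<Longrightarrow> j \<le> g \<Longrightarrow> Q < A j"
    by auto
  have x_pos: "0 < x" using x_bounds inv_bounds lo_pos by linarith
  have A_x: "A x = A0 x" using inv_untouched x_bounds by simp
  have x_ne_k: "x \<noteq> k" using fetched large P_le_Q by auto
  define B where "B = swapA (swapA A k x) k l"
  have B_apply: "B j = (if j = l then A x else if j = x then A k else if j = k then A l else A j)" for j
    using x_ne_k x_bounds inv_bounds by (auto simp: B_def swapA_apply)
  have "card {j\<in>{lo..<Suc k}. A0 j < P} = card {j\<in>{lo..<k}. A0 j < P}"
    "card {j\<in>{lo..<Suc k}. Q \<le> A0 j} = card {j\<in>{lo..<k}. Q \<le> A0 j} + 1"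
    using card_filter_atLeastLessThan_Suc[of lo k] inv_bounds A_k large P_le_Q by auto
  moreover have "card {j\<in>{x - 1<..hi}. A0 j < P} = card {j\<in>{g<..hi}. A0 j < P} + 1"
    using card_filter_greaterThan_shift[OF x_pos x_bounds(2) inv_bounds(3), of "\<lambda>j. A0 j < P"]
      skipped inv_untouched x_bounds P_le_Q A_x fetched by force
  moreover have "card {j\<in>{lo..hi}. \<Phi> (B j)} = card {j\<in>{lo..hi}. \<Phi> (A0 j)}" for \<Phi>
    using card_filter_swapA[of k "{lo..hi}" l \<Phi> "swapA A k x"] card_filter_swapA[of k "{lo..hi}" x \<Phi> A]
      inv_counts inv_bounds k_le_g x_bounds
    by (auto simp: B_def)
  moreover have "Q \<le> B j" if j: "x - 1 < j" "j \<le> hi" for j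
  proof -
    consider "j = x" | "x < j" "j \<le> g" | "g < j" using j x_pos by linarith
    then show ?thesis
      using j large skipped[of j] inv_large[of j] x_bounds inv_bounds by cases (auto simp: B_apply)
  qed
  moreover have "B j < P" if "lo \<le> j" "j < Suc l" for j
    using that inv_small[of j] fetched inv_bounds x_bounds by (auto simp: B_apply)
  moreover have "B j \<le> Q" if "Suc l \<le> j" "j < Suc k" "j \<le> x - 1" for j
    using that inv_medium[of j] inv_medium[of l] inv_bounds by (auto simp: B_apply)
  ultimately show ?thesis
    unfolding part_inv_def B_def[symmetric]
    using inv_bounds k_le_g x_bounds x_pos x_ne_k inv_untouched inv_swaps A_x fetched P_le_Q
    by (auto simp: B_apply)
qed

end

lemma part_inv_part_loop:
  assumes "part_inv A l g k s K" and "part_loop P Q A l g k s K = (A', l', g', s', K')"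
  shows "\<exists>k'. g' < k' \<and> part_inv A' l' g' k' s' K'"
  using assms
proof (induction "g + 1 - k" arbitrary: A l g k s K rule: less_induct)
  case less
  note unfold = part_loop.simps[of P Q A l g k s K]
  show ?case
  proof (cases "k \<le> g")
    case False
    then show ?thesis using less unfold by (auto intro!: exI[of _ k])
  next
    case k_le_g: True
    define x where "x = inner_g A Q k g"
    have x_bounds: "k \<le> x" "x \<le> g"
      using inner_g_spec[OF k_le_g, of A Q] by (auto simp: x_def)
    consider (small) "A k < P" | (medium) "\<not> A k < P" "\<not> Q \<le> A k"
      | (large) "\<not> A k < P" "Q \<le> A k" "P \<le> A x"
      | (large_small) "\<not> A k < P" "Q \<le> A k" "\<not> P \<le> A x"
      by blast
    then show ?thesis
    proof cases
      case small
      then show ?thesis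
        using less(1)[OF _ part_inv_small_step[OF less(2) k_le_g small]] less(3) k_le_g unfold
        by simp
    next
      case medium
      then show ?thesis
        using less(1)[OF _ part_inv_medium_step[OF less(2) k_le_g medium]] less(3) k_le_g unfold
        by simp
    next
      case large
      then show ?thesis
        using less(1)[OF _ part_inv_large_step[OF less(2) k_le_g large(2) x_def large(3)]]
          less(3) k_le_g x_bounds unfold
        by (simp add: Let_def x_def[symmetric])
    next
      case large_small
      then show ?thesis
        using less(1)[OF _ part_inv_large_small_step[OF less(2) k_le_g large_small(2) x_def large_small(3)]]
          less(3) k_le_g x_bounds unfold
        by (simp add: Let_def x_def[symmetric])
    qed
  qed
qed

lemma part_inv_final_large_count:
  assumes inv: "part_inv A' l' g' k' s' K'" and g'_less: "g' < k'"
    and no_Q: "\<forall>j\<in>{lo..hi}. A0 j \<noteq> Q"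
  shows "card {j\<in>{lo..hi}. Q < A0 j} = hi - g'"
proof -
  from inv have bounds: "lo \<le> l'" "g' \<le> hi"
    and small: "\<forall>j. lo \<le> j \<and> j < l' \<longrightarrow> A' j < P"
    and medium: "\<forall>j. l' \<le> j \<and> j < k' \<and> j \<le> g' \<longrightarrow> A' j \<le> Q"
    and large: "\<forall>j. g' < j \<and> j \<le> hi \<longrightarrow> Q \<le> A' j"
    and counts: "\<forall>\<Phi>. card {j\<in>{lo..hi}. \<Phi> (A' j)} = card {j\<in>{lo..hi}. \<Phi> (A0 j)}"
    unfolding part_inv_def by blast+
  have "card {j\<in>{lo..hi}. A' j = Q} = 0"
    using counts[rule_format, of "\<lambda>v. v = Q"] no_Q by auto
  then have no_Q': "\<forall>j\<in>{lo..hi}. A' j \<noteq> Q" by auto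
  have "{j\<in>{lo..hi}. Q < A' j} = {g'<..hi}"
  proof (intro equalityI subsetI)
    fix j assume "j \<in> {j\<in>{lo..hi}. Q < A' j}"
    then have j: "lo \<le> j" "j \<le> hi" "Q < A' j" by auto
    have "\<not> A' j < P" using j P_le_Q by simp
    then have "l' \<le> j" using small j(1) by (meson not_le)
    moreover have "\<not> A' j \<le> Q" using j by simp
    ultimately have "g' < j" using medium g'_less by (meson le_less_trans not_le)
    then show "j \<in> {g'<..hi}" using j by simp
  next
    fix j assume j: "j \<in> {g'<..hi}"
    then have "lo \<le> j" "Q \<le> A' j" using bounds large inv by (auto simp: part_inv_def)
    moreover have "A' j \<noteq> Q" using no_Q' \<open>lo \<le> j\<close> j by simp
    ultimately show "j \<in> {j\<in>{lo..hi}. Q < A' j}" using j by auto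
  qed
  then show ?thesis using counts[rule_format, of "\<lambda>v. Q < v"] by simp
qed

lemma part_inv_final_small_count:
  assumes inv: "part_inv A' l' g' k' s' K'" and g'_less: "g' < k'"
  shows "card {j\<in>{lo..<k'}. A0 j < P} + card {j\<in>{g'<..hi}. A0 j < P} = card {j\<in>{lo..hi}. A0 j < P}"
proof -
  from inv have bounds: "k' \<le> g' + 2" "g' \<le> hi" "lo \<le> g' + 1"
    and self_swap: "k' = g' + 2 \<longrightarrow> Q \<le> A0 (Suc g') \<and> Suc g' \<le> hi"
    unfolding part_inv_def by blast+
  have "{j\<in>{lo..<k'}. A0 j < P} \<inter> {j\<in>{g'<..hi}. A0 j < P} = {}"
  proof (rule ccontr)
    assume "{j\<in>{lo..<k'}. A0 j < P} \<inter> {j\<in>{g'<..hi}. A0 j < P} \<noteq> {}"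
    then obtain j where "j < k'" "g' < j" "A0 j < P" by auto
    moreover from this have "k' = g' + 2" "j = Suc g'" using bounds by auto
    ultimately show False using self_swap P_le_Q by auto
  qed
  moreover have "{j\<in>{lo..<k'}. A0 j < P} \<union> {j\<in>{g'<..hi}. A0 j < P} = {j\<in>{lo..hi}. A0 j < P}"
    using self_swap g'_less bounds by (cases "k' = g' + 2") auto
  ultimately show ?thesis
    using card_Un_disjoint[of "{j\<in>{lo..<k'}. A0 j < P}" "{j\<in>{g'<..hi}. A0 j < P}"] by simp
qed

text \<open>c is the left end of the block of large elements in the partitioned array.\<close>
lemma part_loop_result:
  assumes lo_le: "lo \<le> hi + 1" and no_Q: "\<forall>j\<in>{lo..hi}. A0 j \<noteq> Q"
    and run: "part_loop P Q A0 lo hi lo 0 {} = (A', l', g', s', K')"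
  defines "c \<equiv> hi + 1 - card {j\<in>{lo..hi}. Q < A0 j}"
  shows "K' = {lo..< c + of_bool (c \<le> hi \<and> Q < A0 c)}"
    and "s' = card {j\<in>{lo..hi}. A0 j < P} + card {j\<in>K'. Q < A0 j}"
proof -
  have "part_inv A0 lo hi lo 0 {}"
    unfolding part_inv_def using lo_le by auto
  then obtain k' where g'_less: "g' < k'" and inv: "part_inv A' l' g' k' s' K'"
    using part_inv_part_loop run by blast
  from inv have bounds: "k' \<le> g' + 2" "g' \<le> hi" "lo \<le> g' + 1" "K' = {lo..<k'}"
    and fetched: "g' < hi \<and> k' \<le> g' + 1 \<longrightarrow> A0 (Suc g') \<le> Q"
    and self_swap: "k' = g' + 2 \<longrightarrow> Q \<le> A0 (Suc g') \<and> Suc g' \<le> hi"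
    and swaps: "s' = card {j\<in>{lo..<k'}. A0 j < P} + card {j\<in>{lo..<k'}. Q \<le> A0 j}
        + card {j\<in>{g'<..hi}. A0 j < P}"
    unfolding part_inv_def by blast+
  have c_eq: "c = Suc g'"
    using part_inv_final_large_count[OF inv g'_less no_Q] bounds by (simp add: c_def)
  show "K' = {lo..< c + of_bool (c \<le> hi \<and> Q < A0 c)}"
  proof (cases "k' = g' + 2")
    case True
    then have "c \<le> hi \<and> Q < A0 c" using self_swap no_Q bounds c_eq by force
    then show ?thesis using True bounds c_eq by simp
  next
    case False
    then have "\<not> (c \<le> hi \<and> Q < A0 c)" using fetched g'_less bounds c_eq by auto
    moreover have "k' = Suc g'" using False g'_less bounds by simp
    ultimately show ?thesis using bounds c_eq by auto
  qed
  have "{lo..<k'} \<subseteq> {lo..hi}" using bounds self_swap g'_less by (cases "k' = g' + 2") auto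
  then have "{j\<in>{lo..<k'}. Q \<le> A0 j} = {j\<in>K'. Q < A0 j}"
    unfolding bounds(4) using no_Q by (auto simp: le_less)
  then show "s' = card {j\<in>{lo..hi}. A0 j < P} + card {j\<in>K'. Q < A0 j}"
    using swaps part_inv_final_small_count[OF inv g'_less] by simp
qed

end

definition same_comparisons ::
    "real \<Rightarrow> real \<Rightarrow> (nat \<Rightarrow> real) \<Rightarrow> real \<Rightarrow> real \<Rightarrow> (nat \<Rightarrow> real) \<Rightarrow> nat set \<Rightarrow> bool" where
  "same_comparisons P Q A P' Q' B R \<longleftrightarrow>
    (\<forall>j\<in>R. (A j < P \<longleftrightarrow> B j < P') \<and> (Q \<le> A j \<longleftrightarrow> Q' \<le> B j) \<and> (Q < A j \<longleftrightarrow> Q' < B j))"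

lemma same_comparisons_swapA:
  assumes "same_comparisons P Q A P' Q' B R" "a \<in> R" "b \<in> R"
  shows "same_comparisons P Q (swapA A a b) P' Q' (swapA B a b) R"
  using assms by (auto simp: same_comparisons_def swapA_apply)

lemma part_loop_cong:
  assumes "same_comparisons P Q A P' Q' B {lo..hi}" and "lo \<le> l" "l \<le> k" "g \<le> hi"
  shows "snd (part_loop P Q A l g k s K) = snd (part_loop P' Q' B l g k s K)"
  using assms
proof (induction P Q A l g k s K arbitrary: B rule: part_loop.induct)
  case (1 P Q A l g k s K)
  note unfold = part_loop.simps[of P Q A l g k s K] part_loop.simps[of P' Q' B l g k s K]
  have same: "same_comparisons P Q A P' Q' B {lo..hi}" by fact
  show ?case
  proof (cases "k \<le> g")
    case False
    then show ?thesis by (simp add: unfold)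
  next
    case k_le_g: True
    have k_in: "k \<in> {lo..hi}" using 1(6-8) k_le_g by simp
    then have same_k: "(A k < P \<longleftrightarrow> B k < P') \<and> (Q \<le> A k \<longleftrightarrow> Q' \<le> B k)"
      using same by (simp add: same_comparisons_def)
    define x where "x = inner_g A Q k g"
    have x_B: "x = inner_g B Q' k g"
      unfolding x_def using same 1(6-8) by (intro inner_g_cong) (auto simp: same_comparisons_def)
    have x_in: "x \<in> {lo..hi}" using inner_g_spec[OF k_le_g, of A Q] 1(6-8) by (auto simp: x_def)
    then have same_x: "P \<le> A x \<longleftrightarrow> P' \<le> B x"
      using same by (auto simp: same_comparisons_def not_less[symmetric])
    have l_in: "l \<in> {lo..hi}" using 1(6-8) k_le_g by simp
    have x_pred: "x - 1 \<le> hi" using x_in by auto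
    consider (small) "A k < P" | (medium) "\<not> A k < P" "\<not> Q \<le> A k"
      | (large) "\<not> A k < P" "Q \<le> A k" "P \<le> A x"
      | (large_small) "\<not> A k < P" "Q \<le> A k" "\<not> P \<le> A x"
      by blast
    then show ?thesis
    proof cases
      case small
      then show ?thesis
        using 1(1)[OF k_le_g small same_comparisons_swapA[OF same k_in l_in]] 1(6-8) k_le_g same_k
        by (simp add: unfold)
    next
      case medium
      then show ?thesis
        using 1(4)[OF k_le_g medium same] 1(6-8) k_le_g same_k by (simp add: unfold)
    next
      case large
      then show ?thesis
        using 1(2)[OF k_le_g large(1,2) x_def large(3) same_comparisons_swapA[OF same k_in x_in]]
          1(6-8) k_le_g same_k same_x x_pred
        by (simp add: unfold Let_def x_def[symmetric] x_B[symmetric])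
    next
      case large_small
      then show ?thesis
        using 1(3)[OF k_le_g large_small(1,2) x_def large_small(3)
            same_comparisons_swapA[OF same_comparisons_swapA[OF same k_in x_in] k_in l_in]]
          1(6-8) k_le_g same_k same_x x_pred
        by (simp add: unfold Let_def x_def[symmetric] x_B[symmetric])
    qed
  qed
qed

section \<open>Order statistics under order-preserving changes\<close>

lemma insort_key_map: "insort (f x) (map f ys) = map f (insort_key f x ys)"
  by (induction ys) auto

lemma sort_map: "sort (map f xs) = map f (sort_key f xs)"
  by (induction xs) (simp_all add: insort_key_map)

lemma insort_key_cong_order:
  assumes "\<And>i j. i \<in> insert x (set ys) \<Longrightarrow> j \<in> insert x (set ys) \<Longrightarrow> f i \<le> f j \<longleftrightarrow> f' i \<le> f' j"
  shows "insort_key f x ys = insort_key f' x ys"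
  using assms by (induction ys) auto

lemma sort_key_cong_order:
  assumes "\<And>i j. i \<in> set xs \<Longrightarrow> j \<in> set xs \<Longrightarrow> f i \<le> f j \<longleftrightarrow> f' i \<le> f' j"
  shows "sort_key f xs = sort_key f' xs"
  using assms by (induction xs) (auto intro!: insort_key_cong_order)

lemma sort_map_nth_cong_order:
  assumes "\<And>i j. i \<in> set xs \<Longrightarrow> j \<in> set xs \<Longrightarrow> U i \<le> U j \<longleftrightarrow> V i \<le> V j" and "t < length xs"
  shows "\<exists>j\<in>set xs. sort (map U xs) ! t = U j \<and> sort (map V xs) ! t = V j"
proof -
  let ?j = "sort_key U xs ! t"
  have "?j \<in> set xs" using assms(2) by (metis length_sort nth_mem set_sort)
  moreover have "sort_key V xs = sort_key U xs"
    by (rule sort_key_cong_order[symmetric]) (rule assms(1))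
  ultimately show ?thesis using assms(2) by (auto simp: sort_map)
qed

section \<open>The uniform random input\<close>

abbreviation "unif01 \<equiv> uniform_measure lborel {0<..<1::real}"

lemma prob_space_unif01: "prob_space unif01"
  by (rule prob_space_uniform_measure) auto

lemma prob_space_unif_input: "prob_space (unif_input n)"
  unfolding unif_input_def by (rule prob_space_PiM) (rule prob_space_unif01)

definition same_order :: "nat \<Rightarrow> (nat \<Rightarrow> real) \<Rightarrow> (nat \<Rightarrow> real) \<Rightarrow> bool" where
  "same_order n U V \<longleftrightarrow> (\<forall>i\<in>{1..n}. \<forall>j\<in>{1..n}. (U i \<le> U j \<longleftrightarrow> V i \<le> V j))"

lemma order_invariant_measurable:
  assumes invariant: "\<And>U V. U \<in> space (unif_input n) \<Longrightarrow> V \<in> space (unif_input n) \<Longrightarrow>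
      same_order n U V \<Longrightarrow> F U = F V"
  shows "{U \<in> space (unif_input n). F U \<in> S} \<in> sets (unif_input n)"
proof -
  define M where "M = unif_input n"
  define pattern where "pattern U = {p \<in> {1..n}\<times>{1..n}. U (fst p) \<le> U (snd p)}" for U :: "nat \<Rightarrow> real"
  define X where "X = {U \<in> space M. F U \<in> S}"
  have pattern_class: "{V \<in> space M. pattern V = R} \<in> sets M" for R
  proof -
    have "(\<lambda>V. V i) \<in> borel_measurable M" if "i \<in> {1..n}" for i
      using measurable_compose[OF measurable_component_singleton[OF that] measurable_ident_sets,
          of "\<lambda>_. unif01" borel]
      by (simp add: M_def unif_input_def)
    then have "Measurable.pred M (\<lambda>V. V i \<le> V j)" if "i \<in> {1..n}" "j \<in> {1..n}" for i j
      using that unfolding pred_def by (intro borel_measurable_le) auto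
    then have "Measurable.pred M (\<lambda>V. R \<subseteq> {1..n}\<times>{1..n} \<and>
        (\<forall>p\<in>{1..n}\<times>{1..n}. p \<in> R \<longleftrightarrow> V (fst p) \<le> V (snd p)))"
      by (intro pred_intros_logic pred_intros_finite) auto
    moreover have "pattern V = R \<longleftrightarrow> R \<subseteq> {1..n}\<times>{1..n} \<and>
        (\<forall>p\<in>{1..n}\<times>{1..n}. p \<in> R \<longleftrightarrow> V (fst p) \<le> V (snd p))" for V
      by (auto simp: pattern_def)
    ultimately show ?thesis by (simp add: pred_def)
  qed
  have "X = (\<Union>R\<in>pattern ` X. {V \<in> space M. pattern V = R})"
  proof (intro equalityI subsetI)
    fix V assume "V \<in> (\<Union>R\<in>pattern ` X. {V \<in> space M. pattern V = R})"
    then obtain U where U: "U \<in> X" and V: "V \<in> space M" "pattern V = pattern U" by auto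
    have "same_order n U V"
      unfolding same_order_def
    proof (intro ballI)
      fix i j assume "i \<in> {1..n}" "j \<in> {1..n}"
      then show "U i \<le> U j \<longleftrightarrow> V i \<le> V j"
        using V(2) by (auto simp: pattern_def set_eq_iff)
    qed
    then show "V \<in> X" using invariant U V by (auto simp: X_def M_def)
  qed (auto simp: X_def)
  moreover have "finite (pattern ` X)"
    by (rule finite_subset[of _ "Pow ({1..n}\<times>{1..n})"]) (auto simp: pattern_def)
  ultimately have "X \<in> sets M"
    using pattern_class by (metis (no_types, lifting) sets.finite_UN)
  then show ?thesis by (simp add: X_def M_def)
qed

lemma emeasure_unif01_singleton: "emeasure unif01 {x} = 0"
proof -
  have "emeasure lborel ({0<..<1} \<inter> {x}) \<le> emeasure lborel {x::real}"
    by (rule emeasure_mono) auto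
  then show ?thesis by (simp add: emeasure_uniform_measure)
qed

lemma distr_unif_input_pair:
  assumes ij: "i \<in> {1..n}" "j \<in> {1..n}" "i \<noteq> j"
  shows "distr (unif_input n) (unif01 \<Otimes>\<^sub>M unif01) (\<lambda>\<omega>. (\<omega> i, \<omega> j)) = unif01 \<Otimes>\<^sub>M unif01"
proof -
  define f where "f b = (if b then i else j)" for b :: bool
  define reindex where "reindex \<omega> = (\<lambda>b\<in>UNIV. \<omega> (f b))" for \<omega> :: "nat \<Rightarrow> real"
  define B where "B = PiM (UNIV :: bool set) (\<lambda>_. unif01)"
  have f: "inj_on f UNIV" "f \<in> UNIV \<rightarrow> {1..n}"
    using ij by (auto simp: f_def inj_on_def split: if_splits)
  have reindex_distr: "distr (unif_input n) B reindex = B"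
    unfolding unif_input_def B_def reindex_def
    using distr_PiM_reindex[of "{1..n}" "\<lambda>_. unif01" f UNIV] prob_space_unif01 f by simp
  have "case_bool unif01 unif01 = (\<lambda>_. unif01)" by (rule ext) (simp split: bool.split)
  then have pair_distr: "unif01 \<Otimes>\<^sub>M unif01 = distr B (unif01 \<Otimes>\<^sub>M unif01) (\<lambda>x. (x True, x False))"
    using pair_measure_eq_distr_PiM[of unif01 unif01] prob_space_unif01
    by (simp add: B_def prob_space_imp_sigma_finite)
  have reindex_measurable: "reindex \<in> measurable (unif_input n) B"
    unfolding unif_input_def B_def reindex_def
    by (rule measurable_restrict) (use f in \<open>auto intro!: measurable_component_singleton\<close>)
  have pair_measurable: "(\<lambda>x. (x True, x False)) \<in> measurable B (unif01 \<Otimes>\<^sub>M unif01)"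
    unfolding B_def by (intro measurable_Pair measurable_component_singleton) auto
  have "distr (unif_input n) (unif01 \<Otimes>\<^sub>M unif01) (\<lambda>\<omega>. (\<omega> i, \<omega> j))
      = distr (unif_input n) (unif01 \<Otimes>\<^sub>M unif01) ((\<lambda>x. (x True, x False)) \<circ> reindex)"
    by (simp add: comp_def f_def reindex_def)
  also have "\<dots> = distr (distr (unif_input n) B reindex) (unif01 \<Otimes>\<^sub>M unif01) (\<lambda>x. (x True, x False))"
    by (rule distr_distr[OF pair_measurable reindex_measurable, symmetric])
  also have "\<dots> = unif01 \<Otimes>\<^sub>M unif01" using reindex_distr pair_distr by simp
  finally show ?thesis .
qed

lemma unif01_pair_diagonal_null: "{p. fst p = snd p} \<in> null_sets (unif01 \<Otimes>\<^sub>M unif01)"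
proof -
  interpret p: prob_space unif01 by (rule prob_space_unif01)
  have fst: "fst \<in> borel_measurable (unif01 \<Otimes>\<^sub>M unif01)"
    and snd: "snd \<in> borel_measurable (unif01 \<Otimes>\<^sub>M unif01)"
    using measurable_compose[OF measurable_fst measurable_ident_sets[of unif01 borel]]
      measurable_compose[OF measurable_snd measurable_ident_sets[of unif01 borel]]
    by simp_all
  have D: "{p. fst p = snd p} \<in> sets (unif01 \<Otimes>\<^sub>M unif01)"
    using borel_measurable_eq[OF fst snd] by (simp add: space_pair_measure)
  have "emeasure (unif01 \<Otimes>\<^sub>M unif01) {p. fst p = snd p}
      = (\<integral>\<^sup>+ x. emeasure unif01 (Pair x -` {p. fst p = snd p}) \<partial>unif01)"
    by (rule p.emeasure_pair_measure_alt[OF D])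
  also have "\<dots> = (\<integral>\<^sup>+ x. 0 \<partial>unif01)"
  proof (rule nn_integral_cong)
    fix x :: real
    have "Pair x -` {p::real\<times>real. fst p = snd p} = {x}" by auto
    then show "emeasure unif01 (Pair x -` {p::real\<times>real. fst p = snd p}) = 0"
      using emeasure_unif01_singleton by simp
  qed
  finally show ?thesis using D by (simp add: null_sets_def)
qed

lemma unif_input_tie_null:
  assumes ij: "i \<in> {1..n}" "j \<in> {1..n}" "i \<noteq> j"
  shows "{U \<in> space (unif_input n). U i = U j} \<in> null_sets (unif_input n)"
proof -
  have mp: "(\<lambda>\<omega>. (\<omega> i, \<omega> j)) \<in> measurable (unif_input n) (unif01 \<Otimes>\<^sub>M unif01)"
    unfolding unif_input_def using ij by (intro measurable_Pair measurable_component_singleton) auto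
  have D: "{p. fst p = snd p} \<in> sets (unif01 \<Otimes>\<^sub>M unif01)" using unif01_pair_diagonal_null by auto
  have e: "{U \<in> space (unif_input n). U i = U j}
      = (\<lambda>\<omega>. (\<omega> i, \<omega> j)) -` {p. fst p = snd p} \<inter> space (unif_input n)"
    by auto
  have "emeasure (unif_input n) {U \<in> space (unif_input n). U i = U j}
        = emeasure (distr (unif_input n) (unif01 \<Otimes>\<^sub>M unif01) (\<lambda>\<omega>. (\<omega> i, \<omega> j))) {p. fst p = snd p}"
    unfolding e by (rule emeasure_distr[OF mp D, symmetric])
  also have "\<dots> = 0" unfolding distr_unif_input_pair[OF ij] using unif01_pair_diagonal_null by auto
  finally show ?thesis using measurable_sets[OF mp D] e by (simp add: null_sets_def)
qed

definition ties :: "nat \<Rightarrow> (nat \<Rightarrow> real) set" where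
  "ties n = (\<Union>i\<in>{1..n}. \<Union>j\<in>{1..n} - {i}. {U \<in> space (unif_input n). U i = U j})"

lemma ties_null: "ties n \<in> null_sets (unif_input n)"
  unfolding ties_def by (intro null_sets_UN' unif_input_tie_null) auto

section \<open>The first partitioning step\<close>

definition sample_positions :: "nat \<Rightarrow> nat \<Rightarrow> nat \<Rightarrow> nat \<Rightarrow> nat list" where
  "sample_positions t1 t2 t3 n = [1..<t1 + t2 + 2] @ [n - t3..<n + 1]"

definition yq_large :: "nat \<Rightarrow> nat \<Rightarrow> nat \<Rightarrow> nat \<Rightarrow> (nat \<Rightarrow> real) \<Rightarrow> nat set" where
  "yq_large t1 t2 t3 n U = {j\<in>yq_ord t1 t2 t3 n. yq_Q t1 t2 t3 n U < U j}"

lemma yq_P_Q_sample_positions: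
  "yq_P t1 t2 t3 n U = sort (map U (sample_positions t1 t2 t3 n)) ! t1"
  "yq_Q t1 t2 t3 n U = sort (map U (sample_positions t1 t2 t3 n)) ! (t1 + t2 + 1)"
  by (simp_all add: yq_P_def yq_Q_def yq_sample_def sample_positions_def)

lemma sample_positions:
  assumes "t1 + t2 + t3 + 2 \<le> n"
  shows "set (sample_positions t1 t2 t3 n) \<subseteq> {1..n}"
    and "length (sample_positions t1 t2 t3 n) = t1 + t2 + t3 + 2"
    and "set (sample_positions t1 t2 t3 n) \<inter> yq_ord t1 t2 t3 n = {}"
  using assms by (auto simp: sample_positions_def yq_ord_def)

lemma yq_ord_subset: "yq_ord t1 t2 t3 n \<subseteq> {1..n}"
  by (auto simp: yq_ord_def)

lemma card_yq_ord: "card (yq_ord t1 t2 t3 n) = n - (t1 + t2 + t3 + 2)"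
  by (simp add: yq_ord_def)

lemma yq_pivots:
  assumes "t1 + t2 + t3 + 2 \<le> n"
  shows "\<exists>j\<in>set (sample_positions t1 t2 t3 n). yq_P t1 t2 t3 n U = U j"
    and "\<exists>j\<in>set (sample_positions t1 t2 t3 n). yq_Q t1 t2 t3 n U = U j"
    and "yq_P t1 t2 t3 n U \<le> yq_Q t1 t2 t3 n U"
proof -
  let ?s = "sort (map U (sample_positions t1 t2 t3 n))"
  have len: "length ?s = t1 + t2 + t3 + 2" using sample_positions(2)[OF assms] by simp
  have "?s ! t1 \<in> set (map U (sample_positions t1 t2 t3 n))"
    "?s ! (t1 + t2 + 1) \<in> set (map U (sample_positions t1 t2 t3 n))"
    using nth_mem[of t1 ?s] nth_mem[of "t1 + t2 + 1" ?s] len by simp_all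
  then show "\<exists>j\<in>set (sample_positions t1 t2 t3 n). yq_P t1 t2 t3 n U = U j"
    "\<exists>j\<in>set (sample_positions t1 t2 t3 n). yq_Q t1 t2 t3 n U = U j"
    by (auto simp: yq_P_Q_sample_positions)
  have "?s ! t1 \<le> ?s ! (t1 + t2 + 1)" using len by (intro sorted_nth_mono) auto
  then show "yq_P t1 t2 t3 n U \<le> yq_Q t1 t2 t3 n U" by (simp add: yq_P_Q_sample_positions)
qed

lemma yq_pivots_same_order:
  assumes kn: "t1 + t2 + t3 + 2 \<le> n" and same: "same_order n U V"
  obtains jP jQ where "jP \<in> {1..n}" "yq_P t1 t2 t3 n U = U jP" "yq_P t1 t2 t3 n V = V jP"
    and "jQ \<in> {1..n}" "yq_Q t1 t2 t3 n U = U jQ" "yq_Q t1 t2 t3 n V = V jQ"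
proof -
  let ?xs = "sample_positions t1 t2 t3 n"
  have cmp_sample: "U i \<le> U j \<longleftrightarrow> V i \<le> V j" if "i \<in> set ?xs" "j \<in> set ?xs" for i j
    using same that sample_positions(1)[OF kn] unfolding same_order_def by blast
  have in_range: "t1 < length ?xs" "t1 + t2 + 1 < length ?xs"
    using sample_positions(2)[OF kn] by simp_all
  obtain jP where jP: "jP \<in> set ?xs"
    "sort (map U ?xs) ! t1 = U jP" "sort (map V ?xs) ! t1 = V jP"
    using sort_map_nth_cong_order[of ?xs U V, OF cmp_sample in_range(1)] by blast
  obtain jQ where jQ: "jQ \<in> set ?xs"
    "sort (map U ?xs) ! (t1 + t2 + 1) = U jQ" "sort (map V ?xs) ! (t1 + t2 + 1) = V jQ"
    using sort_map_nth_cong_order[of ?xs U V, OF cmp_sample in_range(2)] by blast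
  show ?thesis
    by (rule that[of jP jQ]) (use jP jQ sample_positions(1)[OF kn] in \<open>auto simp: yq_P_Q_sample_positions\<close>)
qed

lemma yq_same_order:
  assumes kn: "t1 + t2 + t3 + 2 \<le> n" and same: "same_order n U V"
  shows "yq_I t1 t2 t3 n U = yq_I t1 t2 t3 n V"
    and "yq_large t1 t2 t3 n U = yq_large t1 t2 t3 n V"
    and "yq_TS t1 t2 t3 n U = yq_TS t1 t2 t3 n V"
proof -
  have cmp: "U a \<le> U b \<longleftrightarrow> V a \<le> V b" if "a \<in> {1..n}" "b \<in> {1..n}" for a b
    using same that unfolding same_order_def by blast
  obtain jP jQ where jP_in: "jP \<in> {1..n}" and jP: "yq_P t1 t2 t3 n U = U jP" "yq_P t1 t2 t3 n V = V jP"
    and jQ_in: "jQ \<in> {1..n}" and jQ: "yq_Q t1 t2 t3 n U = U jQ" "yq_Q t1 t2 t3 n V = V jQ"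
    using yq_pivots_same_order[OF kn same] by metis
  have pivot_cmp:
    "U j < yq_P t1 t2 t3 n U \<longleftrightarrow> V j < yq_P t1 t2 t3 n V"
    "yq_P t1 t2 t3 n U < U j \<longleftrightarrow> yq_P t1 t2 t3 n V < V j"
    "U j < yq_Q t1 t2 t3 n U \<longleftrightarrow> V j < yq_Q t1 t2 t3 n V"
    "yq_Q t1 t2 t3 n U < U j \<longleftrightarrow> yq_Q t1 t2 t3 n V < V j"
    "yq_Q t1 t2 t3 n U \<le> U j \<longleftrightarrow> yq_Q t1 t2 t3 n V \<le> V j"
    if "j \<in> yq_ord t1 t2 t3 n" for j
  proof -
    have j: "j \<in> {1..n}" using that yq_ord_subset by blast
    show "U j < yq_P t1 t2 t3 n U \<longleftrightarrow> V j < yq_P t1 t2 t3 n V"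
      "yq_P t1 t2 t3 n U < U j \<longleftrightarrow> yq_P t1 t2 t3 n V < V j"
      "U j < yq_Q t1 t2 t3 n U \<longleftrightarrow> V j < yq_Q t1 t2 t3 n V"
      "yq_Q t1 t2 t3 n U < U j \<longleftrightarrow> yq_Q t1 t2 t3 n V < V j"
      "yq_Q t1 t2 t3 n U \<le> U j \<longleftrightarrow> yq_Q t1 t2 t3 n V \<le> V j"
      using cmp[OF j jP_in] cmp[OF jP_in j] cmp[OF j jQ_in] cmp[OF jQ_in j]
      unfolding jP jQ by (simp_all add: not_le[symmetric])
  qed
  show "yq_I t1 t2 t3 n U = yq_I t1 t2 t3 n V" "yq_large t1 t2 t3 n U = yq_large t1 t2 t3 n V"
    unfolding yq_I_def yq_large_def Let_def by (simp_all add: pivot_cmp cong: conj_cong)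
  have "same_comparisons (yq_P t1 t2 t3 n U) (yq_Q t1 t2 t3 n U) U
      (yq_P t1 t2 t3 n V) (yq_Q t1 t2 t3 n V) V (yq_ord t1 t2 t3 n)"
    by (simp add: same_comparisons_def pivot_cmp)
  then have "snd (yq_first_partition t1 t2 t3 n U) = snd (yq_first_partition t1 t2 t3 n V)"
    unfolding yq_first_partition_def yq_ord_def by (rule part_loop_cong) simp_all
  then show "yq_TS t1 t2 t3 n U = yq_TS t1 t2 t3 n V"
    unfolding yq_TS_def by (rule arg_cong[where f = "\<lambda>x. fst (snd (snd x))"])
qed

lemma yq_measurable:
  assumes "t1 + t2 + t3 + 2 \<le> n"
  shows "{U \<in> space (unif_input n).
      (yq_I t1 t2 t3 n U, yq_large t1 t2 t3 n U, yq_TS t1 t2 t3 n U) \<in> S} \<in> sets (unif_input n)"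
proof (rule order_invariant_measurable)
  fix U V assume "same_order n U V"
  from yq_same_order[OF assms this]
  show "(yq_I t1 t2 t3 n U, yq_large t1 t2 t3 n U, yq_TS t1 t2 t3 n U) =
      (yq_I t1 t2 t3 n V, yq_large t1 t2 t3 n V, yq_TS t1 t2 t3 n V)"
    by simp
qed

lemma ordinary_ne_pivots:
  assumes kn: "t1 + t2 + t3 + 2 \<le> n" and U: "U \<in> space (unif_input n)" "U \<notin> ties n"
    and j: "j \<in> yq_ord t1 t2 t3 n"
  shows "U j \<noteq> yq_P t1 t2 t3 n U" and "U j \<noteq> yq_Q t1 t2 t3 n U"
proof -
  have distinct: "U a \<noteq> U b" if "a \<in> {1..n}" "b \<in> {1..n}" "a \<noteq> b" for a b
    using U that unfolding ties_def by blast
  obtain jP jQ where "jP \<in> set (sample_positions t1 t2 t3 n)" "yq_P t1 t2 t3 n U = U jP"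
    "jQ \<in> set (sample_positions t1 t2 t3 n)" "yq_Q t1 t2 t3 n U = U jQ"
    using yq_pivots(1,2)[OF kn] by metis
  moreover have "j \<in> {1..n}" using j yq_ord_subset by blast
  ultimately show "U j \<noteq> yq_P t1 t2 t3 n U" "U j \<noteq> yq_Q t1 t2 t3 n U"
    using distinct j sample_positions(1,3)[OF kn] by (metis disjoint_iff subsetD)+
qed

lemma card_Int_atLeastLessThan_extend:
  fixes L :: "nat set"
  assumes "finite L" "lo \<le> c"
  shows "card (L \<inter> {lo..<c + of_bool (c \<in> L)}) = card (L \<inter> {lo..<c}) + of_bool (c \<in> L)"
proof (cases "c \<in> L")
  case True
  then have "L \<inter> {lo..<c + of_bool (c \<in> L)} = insert c (L \<inter> {lo..<c})"
    using assms(2) by auto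
  then show ?thesis using assms(1) True by simp
qed simp

lemma yq_first_partition_no_ties:
  assumes kn: "t1 + t2 + t3 + 2 \<le> n" and U: "U \<in> space (unif_input n)" "U \<notin> ties n"
  defines "c \<equiv> n - t3 - card (yq_large t1 t2 t3 n U)"
  shows "yq_K t1 t2 t3 n U = {t1 + t2 + 2..<c + of_bool (c \<in> yq_large t1 t2 t3 n U)}"
    and "yq_TS t1 t2 t3 n U = fst (yq_I t1 t2 t3 n U) + yq_lK t1 t2 t3 n U"
proof -
  define lo hi P Q where "lo = t1 + t2 + 2" and "hi = n - t3 - 1"
    and "P = yq_P t1 t2 t3 n U" and "Q = yq_Q t1 t2 t3 n U"
  have ord: "yq_ord t1 t2 t3 n = {lo..hi}" by (simp add: yq_ord_def lo_def hi_def)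
  interpret dual_pivot_partition P Q U lo hi
    using yq_pivots(3)[OF kn] by unfold_locales (simp_all add: P_def Q_def lo_def)
  obtain A' l' g' s' K' where run: "part_loop P Q U lo hi lo 0 {} = (A', l', g', s', K')"
    by (metis prod_cases5)
  have no_Q: "\<forall>j\<in>{lo..hi}. U j \<noteq> Q"
    using ordinary_ne_pivots(2)[OF kn U] by (simp add: ord Q_def)
  have large: "yq_large t1 t2 t3 n U = {j\<in>{lo..hi}. Q < U j}"
    by (simp add: yq_large_def ord Q_def)
  have lo_le: "lo \<le> hi + 1" "hi + 1 = n - t3" using kn by (simp_all add: lo_def hi_def)
  have c_eq: "c = hi + 1 - card {j\<in>{lo..hi}. Q < U j}" by (simp only: c_def large lo_le(2))
  have "card {j\<in>{lo..hi}. Q < U j} \<le> hi + 1 - lo" 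
    using card_mono[of "{lo..hi}" "{j\<in>{lo..hi}. Q < U j}"] by (simp add: subset_iff)
  then have "lo \<le> c" using c_eq lo_le by linarith
  then have c_large: "c \<le> hi \<and> Q < U c \<longleftrightarrow> c \<in> yq_large t1 t2 t3 n U" by (auto simp: large)
  have first: "yq_first_partition t1 t2 t3 n U = (A', l', g', s', K')"
    using run by (simp add: yq_first_partition_def lo_def hi_def P_def Q_def)
  show K: "yq_K t1 t2 t3 n U = {t1 + t2 + 2..<c + of_bool (c \<in> yq_large t1 t2 t3 n U)}"
    using part_loop_result(1)[OF lo_le(1) no_Q run] first c_eq c_large
    by (simp add: yq_K_def lo_def)
  have "yq_TS t1 t2 t3 n U = card {j\<in>{lo..hi}. U j < P} + card {j\<in>K'. Q < U j}"
    using part_loop_result(2)[OF lo_le(1) no_Q run] first by (simp add: yq_TS_def)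
  then show "yq_TS t1 t2 t3 n U = fst (yq_I t1 t2 t3 n U) + yq_lK t1 t2 t3 n U"
    using first by (simp add: yq_I_def yq_lK_def yq_K_def Let_def ord P_def Q_def)
qed

lemma yq_TS_AE:
  assumes "t1 + t2 + t3 + 2 \<le> n"
  shows "AE U in unif_input n. yq_TS t1 t2 t3 n U = fst (yq_I t1 t2 t3 n U) + yq_lK t1 t2 t3 n U"
  using yq_first_partition_no_ties(2)[OF assms] by (intro AE_I'[OF ties_null]) blast

lemma yq_I_sum_no_ties:
  assumes kn: "t1 + t2 + t3 + 2 \<le> n" and U: "U \<in> space (unif_input n)" "U \<notin> ties n"
    and I: "yq_I t1 t2 t3 n U = (i1, i2, i3)"
  shows "i1 + i2 + i3 = n - (t1 + t2 + t3 + 2)"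
proof -
  define P Q Ord where "P = yq_P t1 t2 t3 n U" and "Q = yq_Q t1 t2 t3 n U"
    and "Ord = yq_ord t1 t2 t3 n"
  define S1 S2 S3 where "S1 = {j\<in>Ord. U j < P}" and "S2 = {j\<in>Ord. P < U j \<and> U j < Q}"
    and "S3 = {j\<in>Ord. Q < U j}"
  have "P \<le> Q" using yq_pivots(3)[OF kn] by (simp add: P_def Q_def)
  have fin: "finite S1" "finite S2" "finite S3" by (simp_all add: S1_def S2_def S3_def Ord_def yq_ord_def)
  have "U j \<noteq> P" "U j \<noteq> Q" if "j \<in> Ord" for j
    using ordinary_ne_pivots[OF kn U] that by (auto simp: P_def Q_def Ord_def)
  then have "Ord = S1 \<union> S2 \<union> S3" by (auto simp: S1_def S2_def S3_def less_le)
  moreover have "card (S1 \<union> S2 \<union> S3) = card (S1 \<union> S2) + card S3"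
    using fin \<open>P \<le> Q\<close> by (auto simp: S1_def S2_def S3_def intro!: card_Un_disjoint)
  moreover have "card (S1 \<union> S2) = card S1 + card S2"
    using fin \<open>P \<le> Q\<close> by (auto simp: S1_def S2_def intro!: card_Un_disjoint)
  ultimately have "card Ord = card S1 + card S2 + card S3" by simp
  then show ?thesis
    using I by (simp add: yq_I_def Let_def card_yq_ord P_def Q_def Ord_def S1_def S2_def S3_def)
qed

section \<open>Exchangeability of the large positions\<close>

lemma permutes_mapping_subset:
  assumes "finite S" "L \<subseteq> S" "L' \<subseteq> S" "card L = card L'"
  obtains \<sigma> where "\<sigma> permutes S" "\<sigma> ` L = L'"
proof -
  have fin: "finite L" "finite L'" "finite (S - L)" "finite (S - L')"
    using assms finite_subset by auto
  obtain h1 where h1: "bij_betw h1 L L'" using finite_same_card_bij[OF fin(1,2) assms(4)] by blast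
  have "card (S - L) = card (S - L')" using assms fin by (simp add: card_Diff_subset)
  then obtain h2 where h2: "bij_betw h2 (S - L) (S - L')"
    using finite_same_card_bij[OF fin(3,4)] by blast
  define \<sigma> where "\<sigma> j = (if j \<in> L then h1 j else if j \<in> S then h2 j else j)" for j
  have "bij_betw \<sigma> L L'"
    using h1 by (rule bij_betw_cong[THEN iffD1, rotated]) (simp add: \<sigma>_def)
  moreover have "bij_betw \<sigma> (S - L) (S - L')"
    using h2 by (rule bij_betw_cong[THEN iffD1, rotated]) (simp add: \<sigma>_def)
  ultimately have "bij_betw \<sigma> (L \<union> (S - L)) (L' \<union> (S - L'))" by (rule bij_betw_combine) blast
  then have "\<sigma> permutes S"
    using assms(2,3) by (intro bij_imp_permutes) (auto simp: \<sigma>_def Un_absorb1)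
  moreover have "\<sigma> ` L = L'" using h1 by (auto simp: bij_betw_def \<sigma>_def)
  ultimately show ?thesis using that by blast
qed

lemma permutes_image_Collect:
  assumes "\<sigma> permutes S"
  shows "\<sigma> ` {j\<in>S. \<phi> (\<sigma> j)} = {j\<in>S. \<phi> j}"
  using permutes_image[OF assms] permutes_in_image[OF assms] by force

lemma card_permutes_Collect:
  assumes "\<sigma> permutes S"
  shows "card {j\<in>S. \<phi> (\<sigma> j)} = card {j\<in>S. \<phi> j}"
  using card_image[OF inj_on_subset[OF permutes_inj_on[OF assms]]] permutes_image_Collect[OF assms]
  by (metis (no_types, lifting) mem_Collect_eq subsetI)

definition permute_input :: "nat \<Rightarrow> (nat \<Rightarrow> nat) \<Rightarrow> (nat \<Rightarrow> real) \<Rightarrow> nat \<Rightarrow> real" where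
  "permute_input n \<sigma> U = (\<lambda>j\<in>{1..n}. U (\<sigma> j))"

lemma permute_input_measure_preserving:
  assumes "\<sigma> permutes {1..n}"
  shows "permute_input n \<sigma> \<in> measurable (unif_input n) (unif_input n)"
    and "distr (unif_input n) (unif_input n) (permute_input n \<sigma>) = unif_input n"
proof -
  have maps: "\<sigma> \<in> {1..n} \<rightarrow> {1..n}" using permutes_in_image[OF assms] by auto
  show "permute_input n \<sigma> \<in> measurable (unif_input n) (unif_input n)"
    unfolding unif_input_def permute_input_def
    by (rule measurable_restrict) (use maps in \<open>auto intro!: measurable_component_singleton\<close>)
  show "distr (unif_input n) (unif_input n) (permute_input n \<sigma>) = unif_input n"
    unfolding unif_input_def permute_input_def
    using distr_PiM_reindex[of "{1..n}" "\<lambda>_. unif01" \<sigma> "{1..n}"] prob_space_unif01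
      permutes_inj_on[OF assms] maps
    by simp
qed

lemma yq_permute_ordinary:
  assumes kn: "t1 + t2 + t3 + 2 \<le> n" and \<sigma>: "\<sigma> permutes yq_ord t1 t2 t3 n"
  shows "yq_I t1 t2 t3 n (permute_input n \<sigma> U) = yq_I t1 t2 t3 n U"
    and "\<sigma> ` yq_large t1 t2 t3 n (permute_input n \<sigma> U) = yq_large t1 t2 t3 n U"
proof -
  define Ord where "Ord = yq_ord t1 t2 t3 n"
  define T where "T = permute_input n \<sigma> U"
  have "\<sigma> j = j" if "j \<in> set (sample_positions t1 t2 t3 n)" for j
    using that sample_positions(3)[OF kn] permutes_not_in[OF \<sigma>] by auto
  then have "map T (sample_positions t1 t2 t3 n) = map U (sample_positions t1 t2 t3 n)"
    using sample_positions(1)[OF kn] by (auto simp: T_def permute_input_def)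
  then have pivots: "yq_P t1 t2 t3 n T = yq_P t1 t2 t3 n U" "yq_Q t1 t2 t3 n T = yq_Q t1 t2 t3 n U"
    by (simp_all only: yq_P_Q_sample_positions)
  have T_Ord: "T j = U (\<sigma> j)" if "j \<in> Ord" for j
    using that yq_ord_subset[of t1 t2 t3 n] by (auto simp: T_def permute_input_def Ord_def)
  have counts: "card {j\<in>Ord. \<phi> (T j)} = card {j\<in>Ord. \<phi> (U j)}" for \<phi>
    using card_permutes_Collect[OF \<sigma>, of "\<lambda>j. \<phi> (U j)"] T_Ord by (simp cong: conj_cong flip: Ord_def)
  show "yq_I t1 t2 t3 n (permute_input n \<sigma> U) = yq_I t1 t2 t3 n U"
    using counts[of "\<lambda>v. v < yq_P t1 t2 t3 n U"]
      counts[of "\<lambda>v. yq_P t1 t2 t3 n U < v \<and> v < yq_Q t1 t2 t3 n U"]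
      counts[of "\<lambda>v. yq_Q t1 t2 t3 n U < v"]
    by (simp add: yq_I_def Let_def pivots flip: Ord_def T_def)
  show "\<sigma> ` yq_large t1 t2 t3 n (permute_input n \<sigma> U) = yq_large t1 t2 t3 n U"
    using permutes_image_Collect[OF \<sigma>, of "\<lambda>j. yq_Q t1 t2 t3 n U < U j"]
    by (simp add: yq_large_def pivots T_Ord flip: Ord_def T_def cong: conj_cong)
qed

text \<open>Permuting the ordinary positions preserves the distribution of the input and fixes the
  pivots, so the set of large positions is exchangeable given I.\<close>
lemma measure_yq_large_exchangeable:
  assumes kn: "t1 + t2 + t3 + 2 \<le> n"
    and L: "L \<subseteq> yq_ord t1 t2 t3 n" "L' \<subseteq> yq_ord t1 t2 t3 n" "card L = card L'"
  shows "\<P>(U in unif_input n. yq_I t1 t2 t3 n U = i \<and> yq_large t1 t2 t3 n U = L')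
       = \<P>(U in unif_input n. yq_I t1 t2 t3 n U = i \<and> yq_large t1 t2 t3 n U = L)"
    (is "measure _ (?E L') = measure _ (?E L)")
proof -
  obtain \<sigma> where \<sigma>: "\<sigma> permutes yq_ord t1 t2 t3 n" "\<sigma> ` L = L'"
    using permutes_mapping_subset[of "yq_ord t1 t2 t3 n" L L'] L by (auto simp: yq_ord_def)
  then have "\<sigma> permutes {1..n}" using permutes_subset yq_ord_subset by blast
  note T = permute_input_measure_preserving[OF this]
  have "permute_input n \<sigma> U \<in> ?E L \<longleftrightarrow> U \<in> ?E L'" if U: "U \<in> space (unif_input n)" for U
  proof -
    have "yq_large t1 t2 t3 n (permute_input n \<sigma> U) \<subseteq> yq_ord t1 t2 t3 n"
      by (auto simp: yq_large_def)
    then have "yq_large t1 t2 t3 n (permute_input n \<sigma> U) = L \<longleftrightarrow> yq_large t1 t2 t3 n U = L'"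
      using yq_permute_ordinary(2)[OF kn \<sigma>(1), of U] inj_on_image_eq_iff[OF permutes_inj_on[OF \<sigma>(1)]]
        \<sigma>(2) L(1) by metis
    then show ?thesis
      using U measurable_space[OF T(1) U] yq_permute_ordinary(1)[OF kn \<sigma>(1), of U] by simp
  qed
  then have "permute_input n \<sigma> -` ?E L \<inter> space (unif_input n) = ?E L'" by auto
  moreover have "?E L \<in> sets (unif_input n)"
    using yq_measurable[OF kn, of "{i} \<times> {L} \<times> UNIV"] by simp
  ultimately show ?thesis using measure_distr[OF T(1), of "?E L", unfolded T(2)] by simp
qed

section \<open>Uniform subsets of fixed size\<close>

definition subsets_of_card :: "'a set \<Rightarrow> nat \<Rightarrow> 'a set set" where
  "subsets_of_card S r = {L. L \<subseteq> S \<and> card L = r}"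

lemma finite_subsets_of_card: "finite S \<Longrightarrow> finite (subsets_of_card S r)"
  unfolding subsets_of_card_def by (rule finite_subset[of _ "Pow S"]) auto

lemma subsets_of_card_nonempty:
  assumes "finite S" "r \<le> card S"
  shows "subsets_of_card S r \<noteq> {}"
  using obtain_subset_with_card_n[OF assms(2)] unfolding subsets_of_card_def by blast

lemma bij_betw_insert_subsets_of_card:
  assumes "finite S" "x \<in> S"
  shows "bij_betw (insert x) (subsets_of_card (S - {x}) k) {L\<in>subsets_of_card S (Suc k). x \<in> L}"
proof (rule bij_betw_imageI)
  show "inj_on (insert x) (subsets_of_card (S - {x}) k)"
  proof (rule inj_onI)
    fix A B assume "A \<in> subsets_of_card (S - {x}) k" "B \<in> subsets_of_card (S - {x}) k"
      and eq: "insert x A = insert x B"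
    then have "x \<notin> A" "x \<notin> B" by (auto simp: subsets_of_card_def)
    then show "A = B" using eq by (metis Diff_insert_absorb)
  qed
  show "insert x ` subsets_of_card (S - {x}) k = {L\<in>subsets_of_card S (Suc k). x \<in> L}"
  proof (intro equalityI subsetI)
    fix L assume "L \<in> insert x ` subsets_of_card (S - {x}) k"
    then obtain L' where "L' \<subseteq> S - {x}" "card L' = k" "L = insert x L'"
      by (auto simp: subsets_of_card_def)
    moreover from this have "finite L'" "x \<notin> L'" using assms(1) finite_subset by blast+
    ultimately show "L \<in> {L\<in>subsets_of_card S (Suc k). x \<in> L}"
      using assms(2) by (auto simp: subsets_of_card_def)
  next
    fix L assume L: "L \<in> {L\<in>subsets_of_card S (Suc k). x \<in> L}"
    then have "finite L" using assms(1) finite_subset by (auto simp: subsets_of_card_def)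
    then have "L - {x} \<in> subsets_of_card (S - {x}) k"
      using L by (auto simp: subsets_of_card_def)
    moreover have "L = insert x (L - {x})" using L by auto
    ultimately show "L \<in> insert x ` subsets_of_card (S - {x}) k" by blast
  qed
qed

lemma card_subsets_of_card_mem:
  assumes "finite S" and "x \<in> S \<or> r = 0"
  shows "card {L\<in>subsets_of_card S r. x \<in> L} * card S = r * card (subsets_of_card S r)"
proof (cases r)
  case 0
  then have "{L\<in>subsets_of_card S r. x \<in> L} = {}"
    using assms(1) finite_subset by (fastforce simp: subsets_of_card_def)
  then have "card {L\<in>subsets_of_card S r. x \<in> L} = 0" by (simp only: card.empty)
  then show ?thesis using 0 by simp
next
  case (Suc k)
  then have x: "x \<in> S" using assms(2) by auto
  have "card {L\<in>subsets_of_card S r. x \<in> L} = card (subsets_of_card (S - {x}) k)"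
    using bij_betw_same_card[OF bij_betw_insert_subsets_of_card[OF assms(1) x]] Suc by simp
  also have "\<dots> = (card S - 1) choose k"
    using assms(1) x by (simp add: subsets_of_card_def n_subsets)
  finally have "card {L\<in>subsets_of_card S r. x \<in> L} = (card S - 1) choose k" .
  moreover have "card (subsets_of_card S r) = card S choose Suc k"
    using assms(1) Suc by (simp add: subsets_of_card_def n_subsets)
  moreover have "card S = Suc (card S - 1)"
    using assms(1) x by (cases "card S") auto
  ultimately show ?thesis
    using Suc by (metis Suc_times_binomial mult.commute)
qed

lemma membership_subsets_of_card_bernoulli:
  assumes "finite S" "r \<le> card S" "x \<in> S \<or> r = 0"
  shows "map_pmf (\<lambda>L. x \<in> L) (pmf_of_set (subsets_of_card S r)) = bernoulli_pmf (real r / real (card S))"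
proof -
  define \<L> A p where "\<L> = subsets_of_card S r" and "A = {L\<in>\<L>. x \<in> L}"
    and "p = real r / real (card S)"
  have fin: "finite \<L>" and ne: "\<L> \<noteq> {}"
    using finite_subsets_of_card subsets_of_card_nonempty assms by (auto simp: \<L>_def)
  then have pos: "0 < card \<L>" by (simp add: card_gt_0_iff)
  have p01: "0 \<le> p" "p \<le> 1" using assms(2) by (auto simp: p_def divide_le_eq_1)
  have A_sub: "A \<subseteq> \<L>" by (auto simp: A_def)
  have ratio: "real (card A) / real (card \<L>) = p"
  proof (cases "card S = 0")
    case True
    then show ?thesis using assms by (auto simp: A_def \<L>_def p_def subsets_of_card_def)
  next
    case False
    then show ?thesis
      using card_subsets_of_card_mem[OF assms(1,3)] pos
      by (simp add: A_def \<L>_def p_def field_simps flip: of_nat_mult)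
  qed
  have "pmf (map_pmf (\<lambda>L. x \<in> L) (pmf_of_set \<L>)) b = pmf (bernoulli_pmf p) b" for b
  proof -
    have "pmf (map_pmf (\<lambda>L. x \<in> L) (pmf_of_set \<L>)) b = real (card (\<L> \<inter> {L. (x \<in> L) = b})) / real (card \<L>)"
      by (simp add: pmf_map measure_pmf_of_set[OF ne fin] vimage_def)
    also have "\<dots> = (if b then p else 1 - p)"
    proof (cases b)
      case True
      then have "\<L> \<inter> {L. (x \<in> L) = b} = A" by (auto simp: A_def)
      then show ?thesis using True ratio by simp
    next
      case False
      then have "\<L> \<inter> {L. (x \<in> L) = b} = \<L> - A" by (auto simp: A_def)
      moreover have "real (card (\<L> - A)) = real (card \<L>) - real (card A)"
        using A_sub fin by (simp add: card_Diff_subset finite_subset card_mono of_nat_diff)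
      ultimately show ?thesis using False ratio pos by (simp add: diff_divide_distrib)
    qed
    also have "\<dots> = pmf (bernoulli_pmf p) b" using p01 by (cases b) simp_all
    finally show ?thesis .
  qed
  then show ?thesis unfolding \<L>_def p_def by (rule pmf_eqI)
qed

text \<open>Taking complements and reflecting j to hi - j turns a uniform r-subset L of lo..hi into a
  uniform a-subset of 0..<N that meets 0..<r exactly where L meets the first a positions.\<close>
definition reflected_complement :: "nat \<Rightarrow> nat \<Rightarrow> nat set \<Rightarrow> nat set" where
  "reflected_complement lo hi L = (\<lambda>j. hi - j) ` ({lo..hi} - L)"

lemma bij_betw_reflect_interval:
  fixes lo hi :: nat
  assumes "lo \<le> hi + 1"
  shows "bij_betw (\<lambda>j. hi - j) {lo..hi} {..<hi + 1 - lo}"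
proof (rule bij_betw_imageI)
  show "inj_on (\<lambda>j. hi - j) {lo..hi}" by (rule inj_onI) auto
  have "y \<in> (\<lambda>j. hi - j) ` {lo..hi}" if "y < hi + 1 - lo" for y
    using that assms by (auto simp: image_iff intro!: bexI[of _ "hi - y"])
  then show "(\<lambda>j. hi - j) ` {lo..hi} = {..<hi + 1 - lo}" using assms by auto
qed

lemma card_reflected_complement_Int:
  assumes L: "L \<in> subsets_of_card {lo..hi} r" and ar: "a + r = hi + 1 - lo"
  shows "card (reflected_complement lo hi L \<inter> {..<r}) = card (L \<inter> {lo..<lo + a})"
proof -
  have L_sub: "L \<subseteq> {lo..hi}" "card L = r" using L by (auto simp: subsets_of_card_def)
  then have "finite L" by (simp add: finite_subset)
  then have "card (L \<inter> {lo..<lo + a}) + card (L \<inter> {lo + a..hi})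
      = card ((L \<inter> {lo..<lo + a}) \<union> (L \<inter> {lo + a..hi}))"
    by (intro card_Un_disjoint[symmetric]) auto
  also have "(L \<inter> {lo..<lo + a}) \<union> (L \<inter> {lo + a..hi}) = L" using L_sub by auto
  finally have r_split: "card (L \<inter> {lo..<lo + a}) + card (L \<inter> {lo + a..hi}) = r"
    using L_sub by simp
  have "reflected_complement lo hi L \<inter> {..<r} = (\<lambda>j. hi - j) ` ({lo + a..hi} - L)"
    using ar by (auto simp: reflected_complement_def)
  moreover have "inj_on (\<lambda>j. hi - j) ({lo + a..hi} - L)" by (rule inj_onI) auto
  ultimately have "card (reflected_complement lo hi L \<inter> {..<r}) = card ({lo + a..hi} - L)"
    by (simp add: card_image)
  also have "\<dots> = card {lo + a..hi} - card (L \<inter> {lo + a..hi})"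
    by (simp add: card_Diff_subset_Int Int_commute)
  also have "card {lo + a..hi} = r" using ar by simp
  finally show ?thesis using r_split by simp
qed

lemma bij_betw_reflected_complement:
  assumes lh: "lo \<le> hi + 1" and ar: "a + r = hi + 1 - lo"
  shows "bij_betw (reflected_complement lo hi) (subsets_of_card {lo..hi} r)
    (subsets_of_card {..<hi + 1 - lo} a)"
proof (rule bij_betw_imageI)
  note \<rho> = bij_betw_reflect_interval[OF lh]
  show "inj_on (reflected_complement lo hi) (subsets_of_card {lo..hi} r)"
  proof (rule inj_onI)
    fix L L' assume "L \<in> subsets_of_card {lo..hi} r" "L' \<in> subsets_of_card {lo..hi} r"
      and "reflected_complement lo hi L = reflected_complement lo hi L'"
    then show "L = L'"
      using inj_on_image_eq_iff[OF bij_betw_imp_inj_on[OF \<rho>], of "{lo..hi} - L" "{lo..hi} - L'"]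
      by (auto simp: reflected_complement_def subsets_of_card_def)
  qed
  show "reflected_complement lo hi ` subsets_of_card {lo..hi} r = subsets_of_card {..<hi + 1 - lo} a"
  proof (intro equalityI subsetI)
    fix S assume "S \<in> reflected_complement lo hi ` subsets_of_card {lo..hi} r"
    then obtain L where L: "L \<subseteq> {lo..hi}" "card L = r" "S = reflected_complement lo hi L"
      by (auto simp: subsets_of_card_def)
    then have "card S = card ({lo..hi} - L)"
      using card_image[OF inj_on_subset[OF bij_betw_imp_inj_on[OF \<rho>]]]
      by (auto simp: reflected_complement_def)
    then show "S \<in> subsets_of_card {..<hi + 1 - lo} a"
      using L bij_betw_imp_surj_on[OF \<rho>] ar
      by (auto simp: subsets_of_card_def reflected_complement_def card_Diff_subset finite_subset)
  next
    fix S assume "S \<in> subsets_of_card {..<hi + 1 - lo} a"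
    then have S: "S \<subseteq> {..<hi + 1 - lo}" "card S = a" by (auto simp: subsets_of_card_def)
    define L where "L = {lo..hi} - (\<lambda>j. hi - j) ` S"
    have "S \<subseteq> {..hi}" using S(1) by auto
    moreover have "inj_on (\<lambda>j. hi - j) {..hi}" by (rule inj_onI) auto
    ultimately have "inj_on (\<lambda>j. hi - j) S" by (rule inj_on_subset[rotated])
    then have S_img: "(\<lambda>j. hi - j) ` S \<subseteq> {lo..hi}" "card ((\<lambda>j. hi - j) ` S) = a"
      using S lh by (auto simp: card_image)
    then have "L \<in> subsets_of_card {lo..hi} r"
      using ar by (auto simp: L_def subsets_of_card_def card_Diff_subset finite_subset)
    moreover have "reflected_complement lo hi L = S"
    proof -
      have "reflected_complement lo hi L = (\<lambda>j. hi - j) ` (\<lambda>j. hi - j) ` S"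
        using S_img by (simp add: reflected_complement_def L_def Diff_Diff_Int Int_absorb1)
      also have "\<dots> = S" using S lh by (force simp: image_image image_iff)
      finally show ?thesis .
    qed
    ultimately show "S \<in> reflected_complement lo hi ` subsets_of_card {lo..hi} r" by blast
  qed
qed

lemma hypg_pmf_subsets_of_card:
  assumes lh: "lo \<le> hi + 1" and ar: "a + r = hi + 1 - lo"
  shows "map_pmf (\<lambda>L. card (L \<inter> {lo..<lo + a})) (pmf_of_set (subsets_of_card {lo..hi} r))
    = hypg_pmf a r (hi + 1 - lo)"
proof -
  have fin: "finite (subsets_of_card {lo..hi} r)" and ne: "subsets_of_card {lo..hi} r \<noteq> {}"
    using ar by (simp_all add: finite_subsets_of_card subsets_of_card_nonempty)
  have "map_pmf (\<lambda>L. card (L \<inter> {lo..<lo + a})) (pmf_of_set (subsets_of_card {lo..hi} r))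
      = map_pmf (\<lambda>S. card (S \<inter> {..<r}))
          (map_pmf (reflected_complement lo hi) (pmf_of_set (subsets_of_card {lo..hi} r)))"
    using card_reflected_complement_Int[OF _ ar]
    by (auto simp: map_pmf_comp set_pmf_of_set[OF ne fin] intro!: map_pmf_cong)
  also have "map_pmf (reflected_complement lo hi) (pmf_of_set (subsets_of_card {lo..hi} r))
      = pmf_of_set (subsets_of_card {..<hi + 1 - lo} a)"
    using bij_betw_reflected_complement[OF lh ar] fin ne
    by (subst map_pmf_of_set_inj) (auto simp: bij_betw_def)
  finally show ?thesis by (simp add: hypg_pmf_def subsets_of_card_def)
qed

text \<open>The joint law of (X, B) when the large positions form a uniform r-subset L of lo..hi.\<close>
definition large_subset_pmf :: "nat \<Rightarrow> nat \<Rightarrow> nat \<Rightarrow> nat \<Rightarrow> (nat \<times> bool) pmf" where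
  "large_subset_pmf lo hi a r =
     map_pmf (\<lambda>L. (card (L \<inter> {lo..<lo + a}), lo + a \<in> L)) (pmf_of_set (subsets_of_card {lo..hi} r))"

lemma large_subset_pmf_marginals:
  assumes "lo \<le> hi + 1" and "a + r = hi + 1 - lo"
  shows "map_pmf fst (large_subset_pmf lo hi a r) = hypg_pmf a r (hi + 1 - lo)"
    and "map_pmf snd (large_subset_pmf lo hi a r) = bernoulli_pmf (real r / real (hi + 1 - lo))"
proof -
  show "map_pmf fst (large_subset_pmf lo hi a r) = hypg_pmf a r (hi + 1 - lo)"
    using hypg_pmf_subsets_of_card[OF assms] by (simp add: large_subset_pmf_def map_pmf_comp)
  have "lo + a \<in> {lo..hi} \<or> r = 0" using assms by auto
  then show "map_pmf snd (large_subset_pmf lo hi a r) = bernoulli_pmf (real r / real (hi + 1 - lo))"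
    using membership_subsets_of_card_bernoulli[of "{lo..hi}" r "lo + a"] assms
    by (simp add: large_subset_pmf_def map_pmf_comp)
qed

lemma pmf_map_large_subset_pmf:
  assumes "lo \<le> hi + 1" and "a + r = hi + 1 - lo"
  shows "pmf (map_pmf f (large_subset_pmf lo hi a r)) m
    = real (card {L\<in>subsets_of_card {lo..hi} r. f (card (L \<inter> {lo..<lo + a}), lo + a \<in> L) = m})
      / real (card (subsets_of_card {lo..hi} r))"
proof -
  have "subsets_of_card {lo..hi} r \<noteq> {}" "finite (subsets_of_card {lo..hi} r)"
    using assms by (simp_all add: subsets_of_card_nonempty finite_subsets_of_card)
  moreover have "{L\<in>subsets_of_card {lo..hi} r. f (card (L \<inter> {lo..<lo + a}), lo + a \<in> L) = m}
      = subsets_of_card {lo..hi} r \<inter> (\<lambda>L. f (card (L \<inter> {lo..<lo + a}), lo + a \<in> L)) -` {m}"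
    by auto
  ultimately show ?thesis
    by (simp add: large_subset_pmf_def map_pmf_comp pmf_map measure_pmf_of_set)
qed

section \<open>The number of swaps given I\<close>

lemma yq_TS_no_ties:
  assumes kn: "t1 + t2 + t3 + 2 \<le> n" and U: "U \<in> space (unif_input n)" "U \<notin> ties n"
    and I: "yq_I t1 t2 t3 n U = (i1, i2, i3)"
  defines "c \<equiv> t1 + t2 + 2 + (i1 + i2)"
  shows "yq_TS t1 t2 t3 n U = i1 + card (yq_large t1 t2 t3 n U \<inter> {t1 + t2 + 2..<c})
      + of_bool (c \<in> yq_large t1 t2 t3 n U)"
proof -
  define L where "L = yq_large t1 t2 t3 n U"
  have "card L = i3" using I by (simp add: L_def yq_large_def yq_I_def Let_def)
  then have c_eq: "c = n - t3 - card L"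
    using yq_I_sum_no_ties[OF kn U I] kn by (simp add: c_def)
  have L_sub: "L \<subseteq> yq_ord t1 t2 t3 n" by (auto simp: L_def yq_large_def)
  then have fin: "finite L" by (simp add: finite_subset yq_ord_def)
  have K: "yq_K t1 t2 t3 n U = {t1 + t2 + 2..<c + of_bool (c \<in> L)}"
    using yq_first_partition_no_ties(1)[OF kn U] by (simp add: c_eq L_def)
  have "c \<in> L \<Longrightarrow> c \<le> n - t3 - 1" using L_sub by (auto simp: yq_ord_def)
  then have "yq_K t1 t2 t3 n U \<subseteq> yq_ord t1 t2 t3 n"
    using yq_I_sum_no_ties[OF kn U I] kn by (auto simp: K yq_ord_def c_def)
  then have "yq_lK t1 t2 t3 n U = card (L \<inter> {t1 + t2 + 2..<c + of_bool (c \<in> L)})"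
    unfolding yq_lK_def K[symmetric] by (auto simp: L_def yq_large_def intro!: arg_cong[where f = card])
  also have "\<dots> = card (L \<inter> {t1 + t2 + 2..<c}) + of_bool (c \<in> L)"
    by (rule card_Int_atLeastLessThan_extend[OF fin]) (simp add: c_def)
  finally show ?thesis
    using yq_first_partition_no_ties(2)[OF kn U] I by (simp add: L_def)
qed

lemma measure_yq_I_sum_large:
  assumes kn: "t1 + t2 + t3 + 2 \<le> n"
  shows "\<P>(U in unif_input n. yq_I t1 t2 t3 n U = (i1, i2, i3) \<and> P (yq_TS t1 t2 t3 n U))
    = (\<Sum>L\<in>subsets_of_card (yq_ord t1 t2 t3 n) i3. \<P>(U in unif_input n.
        yq_I t1 t2 t3 n U = (i1, i2, i3) \<and> yq_large t1 t2 t3 n U = L \<and> P (yq_TS t1 t2 t3 n U)))"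
proof -
  interpret prob_space "unif_input n" by (rule prob_space_unif_input)
  define F where "F L = {U \<in> space (unif_input n). yq_I t1 t2 t3 n U = (i1, i2, i3)
      \<and> yq_large t1 t2 t3 n U = L \<and> P (yq_TS t1 t2 t3 n U)}" for L
  have "card (yq_large t1 t2 t3 n U) = i3" if "yq_I t1 t2 t3 n U = (i1, i2, i3)" for U
    using that by (simp add: yq_large_def yq_I_def Let_def)
  then have "{U \<in> space (unif_input n). yq_I t1 t2 t3 n U = (i1, i2, i3) \<and> P (yq_TS t1 t2 t3 n U)}
      = (\<Union>L\<in>subsets_of_card (yq_ord t1 t2 t3 n) i3. F L)"
    by (auto simp: F_def subsets_of_card_def yq_large_def)
  moreover have "measure (unif_input n) (\<Union>L\<in>subsets_of_card (yq_ord t1 t2 t3 n) i3. F L)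
      = (\<Sum>L\<in>subsets_of_card (yq_ord t1 t2 t3 n) i3. measure (unif_input n) (F L))"
  proof (rule finite_measure_finite_Union)
    show "finite (subsets_of_card (yq_ord t1 t2 t3 n) i3)"
      by (simp add: finite_subsets_of_card yq_ord_def)
    have "F L \<in> sets (unif_input n)" for L
      using yq_measurable[OF kn, of "{(i1, i2, i3)} \<times> {L} \<times> Collect P"] by (simp add: F_def)
    then show "F ` subsets_of_card (yq_ord t1 t2 t3 n) i3 \<subseteq> sets (unif_input n)" by blast
    show "disjoint_family_on F (subsets_of_card (yq_ord t1 t2 t3 n) i3)"
      by (auto simp: disjoint_family_on_def F_def)
  qed
  ultimately show ?thesis by (simp add: F_def)
qed

lemma measure_yq_I_large_TS:
  fixes i1 i2 i3 :: nat
  assumes kn: "t1 + t2 + t3 + 2 \<le> n"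
  defines "c \<equiv> t1 + t2 + 2 + (i1 + i2)"
  shows "\<P>(U in unif_input n.
      yq_I t1 t2 t3 n U = (i1, i2, i3) \<and> yq_large t1 t2 t3 n U = L \<and> yq_TS t1 t2 t3 n U = m)
    = (if i1 + card (L \<inter> {t1 + t2 + 2..<c}) + of_bool (c \<in> L) = m
       then \<P>(U in unif_input n.
         yq_I t1 t2 t3 n U = (i1, i2, i3) \<and> yq_large t1 t2 t3 n U = L)
       else 0)"
proof -
  have "AE U in unif_input n.
      (yq_I t1 t2 t3 n U = (i1, i2, i3) \<and> yq_large t1 t2 t3 n U = L \<and> yq_TS t1 t2 t3 n U = m)
    \<longleftrightarrow> (i1 + card (L \<inter> {t1 + t2 + 2..<c}) + of_bool (c \<in> L) = m
        \<and> yq_I t1 t2 t3 n U = (i1, i2, i3) \<and> yq_large t1 t2 t3 n U = L)"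
  proof (rule AE_I'[OF ties_null], rule subsetI, rule ccontr)
    fix U assume U: "U \<in> {U \<in> space (unif_input n).
        \<not> ((yq_I t1 t2 t3 n U = (i1, i2, i3) \<and> yq_large t1 t2 t3 n U = L \<and> yq_TS t1 t2 t3 n U = m)
        \<longleftrightarrow> (i1 + card (L \<inter> {t1 + t2 + 2..<c}) + of_bool (c \<in> L) = m
            \<and> yq_I t1 t2 t3 n U = (i1, i2, i3) \<and> yq_large t1 t2 t3 n U = L))}"
      and "U \<notin> ties n"
    with yq_TS_no_ties[OF kn, of U i1 i2 i3] show False by (auto simp: c_def)
  qed
  then have "\<P>(U in unif_input n.
      yq_I t1 t2 t3 n U = (i1, i2, i3) \<and> yq_large t1 t2 t3 n U = L \<and> yq_TS t1 t2 t3 n U = m)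
    = \<P>(U in unif_input n. i1 + card (L \<inter> {t1 + t2 + 2..<c}) + of_bool (c \<in> L) = m
        \<and> yq_I t1 t2 t3 n U = (i1, i2, i3) \<and> yq_large t1 t2 t3 n U = L)"
    using yq_measurable[OF kn, of "{(i1, i2, i3)} \<times> {L} \<times> {m}"]
      yq_measurable[OF kn, of "{(i1, i2, i3)} \<times> {L} \<times> UNIV"]
    by (intro measure_eq_AE) auto
  then show ?thesis by simp
qed

lemma yq_I_null:
  assumes kn: "t1 + t2 + t3 + 2 \<le> n" and sum: "i1 + i2 + i3 \<noteq> n - (t1 + t2 + t3 + 2)"
  shows "{U \<in> space (unif_input n). yq_I t1 t2 t3 n U = (i1, i2, i3) \<and> P (yq_TS t1 t2 t3 n U)}
    \<in> null_sets (unif_input n)"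
proof (rule null_sets_subset[OF ties_null])
  show "{U \<in> space (unif_input n). yq_I t1 t2 t3 n U = (i1, i2, i3) \<and> P (yq_TS t1 t2 t3 n U)}
      \<in> sets (unif_input n)"
    using yq_measurable[OF kn, of "{(i1, i2, i3)} \<times> UNIV \<times> Collect P"] by simp
  show "{U \<in> space (unif_input n). yq_I t1 t2 t3 n U = (i1, i2, i3) \<and> P (yq_TS t1 t2 t3 n U)} \<subseteq> ties n"
    using yq_I_sum_no_ties[OF kn] sum by blast
qed

lemma yq_TS_given_I:
  assumes kn: "t1 + t2 + t3 + 2 \<le> n" and sum: "i1 + i2 + i3 = n - (t1 + t2 + t3 + 2)"
  shows "\<P>(U in unif_input n. yq_I t1 t2 t3 n U = (i1, i2, i3) \<and> yq_TS t1 t2 t3 n U = m)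
    = \<P>(U in unif_input n. yq_I t1 t2 t3 n U = (i1, i2, i3))
      * pmf (map_pmf (\<lambda>(x, b). i1 + x + of_bool b)
          (large_subset_pmf (t1 + t2 + 2) (n - t3 - 1) (i1 + i2) i3)) m"
proof -
  define lo hi c where "lo = t1 + t2 + 2" and "hi = n - t3 - 1" and "c = lo + (i1 + i2)"
  define \<L> where "\<L> = subsets_of_card {lo..hi} i3"
  define g where "g L = i1 + card (L \<inter> {lo..<c}) + of_bool (c \<in> L)" for L
  define E where "E L = \<P>(U in unif_input n. yq_I t1 t2 t3 n U = (i1, i2, i3) \<and> yq_large t1 t2 t3 n U = L)" for L
  have ord: "yq_ord t1 t2 t3 n = {lo..hi}" by (simp add: yq_ord_def lo_def hi_def)
  have lh: "lo \<le> hi + 1" and ar: "i1 + i2 + i3 = hi + 1 - lo"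
    using kn sum by (simp_all add: lo_def hi_def)
  have fin: "finite \<L>" and ne: "\<L> \<noteq> {}"
    using ar by (simp_all add: \<L>_def finite_subsets_of_card subsets_of_card_nonempty)
  then obtain L0 where L0: "L0 \<in> \<L>" by blast
  have E_const: "E L = E L0" if "L \<in> \<L>" for L
    using measure_yq_large_exchangeable[OF kn] that L0 by (simp add: E_def \<L>_def subsets_of_card_def ord)
  have "\<P>(U in unif_input n. yq_I t1 t2 t3 n U = (i1, i2, i3) \<and> yq_TS t1 t2 t3 n U = m)
      = (\<Sum>L\<in>\<L>. \<P>(U in unif_input n.
          yq_I t1 t2 t3 n U = (i1, i2, i3) \<and> yq_large t1 t2 t3 n U = L \<and> yq_TS t1 t2 t3 n U = m))"
    using measure_yq_I_sum_large[OF kn, of i1 i2 i3 "\<lambda>t. t = m"] by (simp add: \<L>_def ord)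
  also have "\<dots> = (\<Sum>L\<in>\<L>. if g L = m then E L else 0)"
    by (rule sum.cong[OF refl]) (simp only: measure_yq_I_large_TS[OF kn] g_def E_def c_def lo_def)
  also have "\<dots> = real (card {L\<in>\<L>. g L = m}) * E L0"
    using E_const fin by (simp add: sum.If_cases Int_def)
  also have "\<dots> = real (card \<L>) * E L0
      * pmf (map_pmf (\<lambda>(x, b). i1 + x + of_bool b) (large_subset_pmf lo hi (i1 + i2) i3)) m"
  proof -
    have "pmf (map_pmf (\<lambda>(x, b). i1 + x + of_bool b) (large_subset_pmf lo hi (i1 + i2) i3)) m
        = real (card {L\<in>\<L>. g L = m}) / real (card \<L>)"
      using pmf_map_large_subset_pmf[OF lh ar, of "\<lambda>(x, b). i1 + x + of_bool b" m]
      by (simp add: \<L>_def g_def c_def)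
    moreover have "card \<L> \<noteq> 0" using fin ne by simp
    ultimately show ?thesis by simp
  qed
  also have "real (card \<L>) * E L0 = (\<Sum>L\<in>\<L>. E L)"
    using E_const by simp
  also have "\<dots> = \<P>(U in unif_input n. yq_I t1 t2 t3 n U = (i1, i2, i3))"
    using measure_yq_I_sum_large[OF kn, of i1 i2 i3 "\<lambda>_. True"] by (simp add: \<L>_def ord E_def)
  finally show ?thesis by (simp add: lo_def hi_def)
qed

theorem lemma5p2:
  fixes t1 t2 t3 w n :: nat
  assumes "w \<ge> t1 + t2 + t3 + 2 - 1"
    and "n > w"
  shows "(AE U in unif_input n.
            yq_TS t1 t2 t3 n U = fst (yq_I t1 t2 t3 n U) + yq_lK t1 t2 t3 n U)
       \<and> (\<forall>i1 i2 i3. \<exists>p :: (nat \<times> bool) pmf.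
            map_pmf fst p = hypg_pmf (i1 + i2) i3 (n - (t1 + t2 + t3 + 2))
          \<and> map_pmf snd p = bernoulli_pmf (real i3 / real (n - (t1 + t2 + t3 + 2)))
          \<and> (\<forall>m. measure (unif_input n)
                    {U \<in> space (unif_input n). yq_I t1 t2 t3 n U = (i1, i2, i3) \<and> yq_TS t1 t2 t3 n U = m}
                 = measure (unif_input n) {U \<in> space (unif_input n). yq_I t1 t2 t3 n U = (i1, i2, i3)}
                   * pmf (map_pmf (\<lambda>(x, b). i1 + x + of_bool b) p) m))"
proof -
  have kn: "t1 + t2 + t3 + 2 \<le> n" using assms by simp
  have N: "n - t3 - 1 + 1 - (t1 + t2 + 2) = n - (t1 + t2 + t3 + 2)" using kn by simp
  have "\<exists>p :: (nat \<times> bool) pmf.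
      map_pmf fst p = hypg_pmf (i1 + i2) i3 (n - (t1 + t2 + t3 + 2))
    \<and> map_pmf snd p = bernoulli_pmf (real i3 / real (n - (t1 + t2 + t3 + 2)))
    \<and> (\<forall>m. \<P>(U in unif_input n. yq_I t1 t2 t3 n U = (i1, i2, i3) \<and> yq_TS t1 t2 t3 n U = m)
         = \<P>(U in unif_input n. yq_I t1 t2 t3 n U = (i1, i2, i3))
           * pmf (map_pmf (\<lambda>(x, b). i1 + x + of_bool b) p) m)" for i1 i2 i3
  proof (cases "i1 + i2 + i3 = n - (t1 + t2 + t3 + 2)")
    case True
    then have "t1 + t2 + 2 \<le> n - t3 - 1 + 1" "i1 + i2 + i3 = n - t3 - 1 + 1 - (t1 + t2 + 2)"
      using kn by simp_all
    from large_subset_pmf_marginals[OF this, unfolded N]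
    show ?thesis using yq_TS_given_I[OF kn True] by blast
  next
    case False
    \<comment> \<open>the event I = (i1, i2, i3) is null, so any pmf with the right marginals will do\<close>
    then show ?thesis
      using yq_I_null[OF kn False, of "\<lambda>_. True"] yq_I_null[OF kn False, of "\<lambda>t. t = _"]
      by (intro exI[of _ "pair_pmf (hypg_pmf (i1 + i2) i3 (n - (t1 + t2 + t3 + 2)))
          (bernoulli_pmf (real i3 / real (n - (t1 + t2 + t3 + 2))))"])
        (simp add: map_fst_pair_pmf map_snd_pair_pmf measure_eq_0_null_sets)
  qed
  then show ?thesis using yq_TS_AE[OF kn] by blast
qed

end
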